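(* Let $f:\mathbb{R}\to\mathbb{R}$ be a Schwartz function and $\sigma>0$. Then for all $|\phi|<1$ and $t\in\mathbb{R}$, \[|f_\phi(t)-f(t)|\ll_\sigma\frac{|\phi|}{1+|t|^\sigma}.\]
   Context: $e(x)=e^{2\pi ix}$. For $\phi\in\mathbb{R}$: $f_\phi=f$ if $\phi\equiv0\bmod 2\pi$; otherwise for $\phi\notin\pi\mathbb{Z}$, $f_\phi(w)=e(-\sigma_\phi/8)|\sin\phi|^{-1/2}\int_\mathbb{R}e\big(\frac{\frac12(w^2+w'^2)\cos\phi-ww'}{\sin\phi}\big)f(w')dw'$, where $\sigma_\phi=2\nu+1$ for $\nu\pi<\phi<(\nu+1)\pi$, $\nu\in\mathbb{Z}$. The implied constant depends on $f$ and $\sigma$. *)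

theory Defs
  imports "HOL-Analysis.Analysis"
begin

definition e2pi :: "real \<Rightarrow> complex" where
  "e2pi x = exp (2 * pi * \<i> * complex_of_real x)"

definition schwartz :: "(real \<Rightarrow> real) \<Rightarrow> bool" where
  "schwartz f \<longleftrightarrow>
     (\<forall>n x. ((deriv ^^ n) f has_real_derivative (deriv ^^ Suc n) f x) (at x)) \<and>
     (\<forall>m n. \<exists>C. \<forall>x. \<bar>x ^ m * (deriv ^^ n) f x\<bar> \<le> C)"

definition sigma_phase :: "real \<Rightarrow> real" where
  "sigma_phase \<phi> = 2 * of_int \<lfloor>\<phi> / pi\<rfloor> + 1"

text \<open>Fractional Fourier transform f_phi. For phi an odd multiple of pi (not
  specified in the paper, irrelevant for |phi|<1) we use the standard value f(-w).\<close>
definition frft :: "(real \<Rightarrow> real) \<Rightarrow> real \<Rightarrow> real \<Rightarrow> complex" where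
  "frft f \<phi> w =
    (if \<exists>k::int. \<phi> = 2 * pi * of_int k then complex_of_real (f w)
     else if \<exists>k::int. \<phi> = pi * of_int k then complex_of_real (f (- w))
     else e2pi (- sigma_phase \<phi> / 8) * complex_of_real (\<bar>sin \<phi>\<bar> powr (-1/2)) *
       (LINT w'|lborel. e2pi (((1/2) * (w\<^sup>2 + w'\<^sup>2) * cos \<phi> - w * w') / sin \<phi>)
                         * complex_of_real (f w')))"

end

theory Submission
  imports Defs "HOL-Probability.Probability"
begin

text \<open>
  For 0 < phi < pi/2, completing the square in the phase of the kernel gives
  f_phi(t) = (cos phi)^(-1/2) exp(-i pi t^2 tan phi) (K_s * f)(t / cos phi), where
  K_s(w) = s^(-1/2) exp(-pi w^2 / s) is the Gaussian kernel at the imaginary time s = i tan phi.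
  At a real time tau the kernel is the normal density of variance tau / (2 pi), so a second
  order Taylor expansion gives K_tau * f - f = O(tau). Since K_s solves the heat equation
  4 pi d_s K_s = d_w^2 K_s, moving s along the segment from tan phi to i tan phi changes
  K_s * f by O(tan phi); integration by parts in w shows that all of this survives
  multiplication by polynomial weights |x|^k. The prefactor differs from 1, and t / cos phi
  from t, by O(phi (1 + t^2)) and O(phi t), which the decay of f absorbs. Negative phi
  follow by complex conjugation.
\<close>

lemma vector_differentiable_bound:
  fixes f f' :: "real \<Rightarrow> 'a::real_normed_vector"
  assumes "convex S" "\<And>x. x \<in> S \<Longrightarrow> (f has_vector_derivative f' x) (at x within S)"
    "\<And>x. x \<in> S \<Longrightarrow> norm (f' x) \<le> B" "x \<in> S" "y \<in> S"
  shows "norm (f x - f y) \<le> B * \<bar>x - y\<bar>"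
  using differentiable_bound[OF assms(1) _ _ assms(4,5), of f "\<lambda>x h. h *\<^sub>R f' x" B] assms(2,3)
  by (simp add: has_vector_derivative_def onorm_scaleR_left[OF bounded_linear_ident] onorm_id)

lemma tendsto_integral_dominated:
  fixes K :: "real \<Rightarrow> 'a \<Rightarrow> 'b::{banach, second_countable_topology}"
  assumes "\<And>t. t \<in> S \<Longrightarrow> K t \<in> borel_measurable M" "L \<in> borel_measurable M"
    and "\<And>t w. t \<in> S \<Longrightarrow> norm (K t w) \<le> B w" "integrable M B"
    and "\<And>w. ((\<lambda>t. K t w) \<longlongrightarrow> L w) (at t0 within S)"
  shows "((\<lambda>t. integral\<^sup>L M (K t)) \<longlongrightarrow> integral\<^sup>L M L) (at t0 within S)"
  unfolding tendsto_at_iff_sequentially comp_def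
proof (intro allI impI)
  fix X :: "nat \<Rightarrow> real"
  assume X: "\<forall>i. X i \<in> S - {t0}" "X \<longlonglongrightarrow> t0"
  show "(\<lambda>i. integral\<^sup>L M (K (X i))) \<longlonglongrightarrow> integral\<^sup>L M L"
  proof (rule integral_dominated_convergence[where w=B])
    show "AE w in M. (\<lambda>i. K (X i) w) \<longlonglongrightarrow> L w"
      using assms(5) X unfolding tendsto_at_iff_sequentially comp_def by auto
  qed (use X assms(1-4) in auto)
qed

lemma norm_difference_quotient_le:
  fixes f f' :: "real \<Rightarrow> 'a::real_normed_vector"
  assumes "\<And>\<tau>. a < \<tau> \<Longrightarrow> \<tau> < b \<Longrightarrow> (f has_vector_derivative f' \<tau>) (at \<tau>)"
    and "\<And>\<tau>. a < \<tau> \<Longrightarrow> \<tau> < b \<Longrightarrow> norm (f' \<tau>) \<le> B"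
    and "a < t" "t < b" "a < t0" "t0 < b"
  shows "norm ((f t - f t0 - (t - t0) *\<^sub>R f' t0) /\<^sub>R \<bar>t - t0\<bar>) \<le> 2 * B"
proof -
  let ?S = "{a<..<b}"
  have "closed_segment t0 t \<subseteq> ?S"
    using assms by (auto simp: closed_segment_eq_real_ivl split: if_splits)
  moreover have "norm (f' \<tau> - f' t0) \<le> 2 * B" if "\<tau> \<in> ?S" for \<tau>
    using norm_triangle_ineq4[of "f' \<tau>" "f' t0"] assms(2)[of \<tau>] assms(2)[of t0] assms(5,6) that by auto
  moreover have "(f has_vector_derivative f' \<tau>) (at \<tau> within ?S)" if "\<tau> \<in> ?S" for \<tau>
    using assms(1)[of \<tau>] that by (auto intro: has_vector_derivative_at_within)
  ultimately have "norm (f t - f t0 - (t - t0) *\<^sub>R f' t0) \<le> (2 * B) * \<bar>t - t0\<bar>"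
    using vector_differentiable_bound_linearization[of ?S f f' t0 t t0 "2 * B"] assms(5,6)
    by (simp add: mult.commute)
  moreover have "0 \<le> B"
    using order_trans[OF norm_ge_zero assms(2)[of t0]] assms(5,6) by simp
  moreover have "norm ((f t - f t0 - (t - t0) *\<^sub>R f' t0) /\<^sub>R \<bar>t - t0\<bar>) =
      norm (f t - f t0 - (t - t0) *\<^sub>R f' t0) / \<bar>t - t0\<bar>"
    by (simp add: divide_inverse_commute)
  ultimately show ?thesis
    by (cases "t = t0") (auto simp: divide_le_eq)
qed

lemma has_vector_derivative_integral:
  fixes K K' :: "real \<Rightarrow> 'a \<Rightarrow> 'b::{banach, second_countable_topology}"
  assumes t0: "a < t0" "t0 < b"
    and der: "\<And>t w. a < t \<Longrightarrow> t < b \<Longrightarrow> ((\<lambda>t. K t w) has_vector_derivative K' t w) (at t)"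
    and bound: "\<And>t w. a < t \<Longrightarrow> t < b \<Longrightarrow> norm (K' t w) \<le> B w"
    and "integrable M B"
    and int: "\<And>t. a < t \<Longrightarrow> t < b \<Longrightarrow> integrable M (K t)"
    and "K' t0 \<in> borel_measurable M"
  shows "((\<lambda>t. integral\<^sup>L M (K t)) has_vector_derivative integral\<^sup>L M (K' t0)) (at t0)"
proof -
  let ?S = "{a<..<b}"
  have int': "integrable M (K' t0)"
    by (rule Bochner_Integration.integrable_bound[OF \<open>integrable M B\<close>])
       (use assms in \<open>auto intro!: AE_I2 order_trans[OF bound[OF t0] abs_ge_self]\<close>)
  define Q where "Q t w = (K t w - K t0 w - (t - t0) *\<^sub>R K' t0 w) /\<^sub>R \<bar>t - t0\<bar>" for t w
  have "norm (Q t w) \<le> 2 * B w" if "t \<in> ?S" for t w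
    unfolding Q_def using that t0 der bound
    by (intro norm_difference_quotient_le[of a b "\<lambda>t. K t w" "\<lambda>t. K' t w"]) auto
  moreover have "((\<lambda>t. Q t w) \<longlongrightarrow> 0) (at t0 within ?S)" for w
    using der[OF t0, of w]
    by (auto simp: Q_def has_vector_derivative_def has_derivative_at_within intro: tendsto_within_subset)
  moreover have "Q t \<in> borel_measurable M" if "t \<in> ?S" for t
    using int[of t] int[OF t0] int' that unfolding Q_def by (intro borel_measurable_scaleR) auto
  ultimately have "((\<lambda>t. integral\<^sup>L M (Q t)) \<longlongrightarrow> integral\<^sup>L M (\<lambda>_. 0)) (at t0 within ?S)"
    using \<open>integrable M B\<close> by (intro tendsto_integral_dominated[where B="\<lambda>w. 2 * B w"]) auto
  moreover have "integral\<^sup>L M (Q t) = (integral\<^sup>L M (K t) - integral\<^sup>L M (K t0) -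
      (t - t0) *\<^sub>R integral\<^sup>L M (K' t0)) /\<^sub>R norm (t - t0)" if "t \<in> ?S" for t
    using int[of t] int[OF t0] int' that by (simp add: Q_def[abs_def])
  then have "\<forall>\<^sub>F t in at t0 within ?S. integral\<^sup>L M (Q t) = (integral\<^sup>L M (K t) - integral\<^sup>L M (K t0) -
      (t - t0) *\<^sub>R integral\<^sup>L M (K' t0)) /\<^sub>R norm (t - t0)"
    by (auto simp: eventually_at_filter intro!: always_eventually)
  ultimately have "((\<lambda>t. (integral\<^sup>L M (K t) - integral\<^sup>L M (K t0) - (t - t0) *\<^sub>R integral\<^sup>L M (K' t0))
      /\<^sub>R norm (t - t0)) \<longlongrightarrow> 0) (at t0 within ?S)"
    by (simp add: tendsto_cong)
  then have "((\<lambda>t. integral\<^sup>L M (K t)) has_vector_derivative integral\<^sup>L M (K' t0)) (at t0 within ?S)"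
    by (simp add: has_vector_derivative_def has_derivative_at_within bounded_linear_scaleR_left)
  then show ?thesis
    using at_within_open[of t0 ?S] t0 by simp
qed

lemma integral_eq_0_if_antiderivative_vanishes_at_infinity:
  fixes F f :: "real \<Rightarrow> complex"
  assumes der: "\<And>x. (F has_vector_derivative f x) (at x)"
    and cont: "continuous_on UNIV f" and int: "integrable lborel f"
    and top: "(F \<longlongrightarrow> 0) at_top" and bot: "(F \<longlongrightarrow> 0) at_bot"
  shows "(LINT x|lborel. f x) = 0"
proof -
  have FTC: "(LINT x|lborel. indicator {- real n .. real n} x *\<^sub>R f x) = F (real n) - F (- real n)" for n
    by (rule integral_FTC_atLeastAtMost)
       (auto intro: has_vector_derivative_at_within der continuous_on_subset[OF cont])
  have "(\<lambda>n. LINT x|lborel. indicator {- real n .. real n} x *\<^sub>R f x) \<longlonglongrightarrow> (LINT x|lborel. f x)"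
  proof (rule integral_dominated_convergence[where w="\<lambda>x. norm (f x)"])
    show "AE x in lborel. (\<lambda>n. indicator {- real n .. real n} x *\<^sub>R f x) \<longlonglongrightarrow> f x"
    proof (intro AE_I2)
      fix x :: real
      obtain N :: nat where "\<bar>x\<bar> \<le> real N" using real_arch_simple by blast
      then have "\<forall>n\<ge>N. indicator {- real n .. real n} x *\<^sub>R f x = f x"
        by (auto simp: indicator_def)
      then show "(\<lambda>n. indicator {- real n .. real n} x *\<^sub>R f x) \<longlonglongrightarrow> f x"
        by (intro tendsto_eventually) (auto simp: eventually_sequentially)
    qed
  qed (use int in \<open>auto simp: indicator_def\<close>)
  moreover have "(\<lambda>n. F (real n) - F (- real n)) \<longlonglongrightarrow> 0 - 0"
    by (intro tendsto_diff filterlim_compose[OF top] filterlim_compose[OF bot] filterlim_real_sequentially)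
       (simp add: filterlim_uminus_at_bot filterlim_real_sequentially)
  ultimately show ?thesis
    unfolding FTC by (simp add: LIMSEQ_unique)
qed

lemma abs_taylor_remainder_le:
  fixes g :: "real \<Rightarrow> real"
  assumes "\<And>y. (g has_real_derivative g' y) (at y)" "\<And>y. (g' has_real_derivative g'' y) (at y)"
    and "\<And>y. \<bar>g'' y\<bar> \<le> M"
  shows "\<bar>g w - g x - (w - x) * g' x\<bar> \<le> M * (w - x)\<^sup>2"
proof -
  let ?S = "{min x w .. max x w}"
  have "norm ((g w - (w - x) * g' x) - (g x - (x - x) * g' x)) \<le> (M * \<bar>w - x\<bar>) * \<bar>w - x\<bar>"
  proof (rule vector_differentiable_bound[of ?S "\<lambda>y. g y - (y - x) * g' x" "\<lambda>y. g' y - g' x"])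
    fix y
    assume y: "y \<in> ?S"
    have "((\<lambda>y. g y - (y - x) * g' x) has_real_derivative g' y - g' x) (at y)"
      using assms(1)[of y] by (auto intro!: derivative_eq_intros)
    then show "((\<lambda>y. g y - (y - x) * g' x) has_vector_derivative g' y - g' x) (at y within ?S)"
      by (simp add: has_real_derivative_iff_has_vector_derivative has_vector_derivative_at_within)
    have "\<bar>g' y - g' x\<bar> \<le> M * \<bar>y - x\<bar>"
      using vector_differentiable_bound[of UNIV g' g'' M y x] assms(2,3)
      by (simp add: has_real_derivative_iff_has_vector_derivative)
    also have "\<dots> \<le> M * \<bar>w - x\<bar>"
      using y assms(3)[of 0] by (intro mult_left_mono) (auto simp: min_def max_def split: if_splits)
    finally show "norm (g' y - g' x) \<le> M * \<bar>w - x\<bar>" by simp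
  qed auto
  then show ?thesis
    by (simp add: power2_eq_square abs_mult algebra_simps)
qed

lemma abs_normal_expectation_sub_le:
  fixes g :: "real \<Rightarrow> real"
  assumes \<sigma>: "\<sigma> > 0" and int: "integrable lborel (\<lambda>w. normal_density x \<sigma> w * g w)"
    and taylor: "\<And>w. \<bar>g w - g x - (w - x) * d\<bar> \<le> M * (w - x)\<^sup>2"
  shows "\<bar>(LINT w|lborel. normal_density x \<sigma> w * g w) - g x\<bar> \<le> M * \<sigma>\<^sup>2"
proof -
  let ?n = "normal_density x \<sigma>"
  have mom: "integrable lborel (\<lambda>w. ?n w * (w - x) ^ k)" for k
    using integrable_normal_moment[OF \<sigma>] by blast
  have "(LINT w|lborel. ?n w * (g w - g x - (w - x) * d)) =
        (LINT w|lborel. ?n w * g w - g x * ?n w - d * (?n w * (w - x) ^ 1))"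
    by (intro Bochner_Integration.integral_cong) (auto simp: algebra_simps)
  also have "\<dots> = (LINT w|lborel. ?n w * g w) - g x"
    using int mom[of 1] \<sigma> normal_moment_odd[OF \<sigma>, of x 0]
    by (simp add: has_bochner_integral_integral_eq)
  finally have eq: "(LINT w|lborel. ?n w * g w) - g x = (LINT w|lborel. ?n w * (g w - g x - (w - x) * d))" ..
  have "\<bar>LINT w|lborel. ?n w * (g w - g x - (w - x) * d)\<bar> \<le> (LINT w|lborel. \<bar>?n w * (g w - g x - (w - x) * d)\<bar>)"
    using integral_norm_bound[of lborel "\<lambda>w. ?n w * (g w - g x - (w - x) * d)"] by simp
  also have "\<dots> \<le> (LINT w|lborel. M * (?n w * (w - x) ^ 2))"
  proof (intro integral_mono')
    have "0 \<le> M"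
      using order_trans[OF abs_ge_zero taylor[of "x + 1"]] by simp
    then show "0 \<le> M * (?n w * (w - x) ^ 2)" for w
      by simp
    show "\<bar>?n w * (g w - g x - (w - x) * d)\<bar> \<le> M * (?n w * (w - x) ^ 2)" for w
      using mult_left_mono[OF taylor normal_density_nonneg[of x \<sigma> w]] by (simp add: abs_mult ac_simps)
  qed (use mom[of 2] in simp)
  also have "\<dots> = M * \<sigma>\<^sup>2"
    using normal_moment_even[OF \<sigma>, of x 1] by (simp add: has_bochner_integral_integral_eq)
  finally show ?thesis
    using eq by simp
qed

lemma one_plus_powr_le_power:
  fixes y :: real
  assumes "\<sigma> > 0"
  shows "1 + \<bar>y\<bar> powr \<sigma> \<le> 2 * (1 + \<bar>y\<bar> ^ nat \<lceil>\<sigma>\<rceil>)"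
proof (cases "\<bar>y\<bar> \<le> 1")
  case True
  then have "\<bar>y\<bar> powr \<sigma> \<le> 1"
    using assms by (simp add: powr_le1)
  then show ?thesis
    by (smt (verit) zero_le_power abs_ge_zero)
next
  case False
  then have "\<bar>y\<bar> powr \<sigma> \<le> \<bar>y\<bar> powr real (nat \<lceil>\<sigma>\<rceil>)"
    using assms by (intro powr_mono) auto
  also have "\<dots> = \<bar>y\<bar> ^ nat \<lceil>\<sigma>\<rceil>"
    using False by (simp add: powr_realpow)
  finally show ?thesis
    by (smt (verit) zero_le_power abs_ge_zero)
qed

lemma cos_ge_half: "0 \<le> p \<Longrightarrow> p \<le> 1 \<Longrightarrow> 1/2 \<le> cos (p::real)"
  using cos_monotone_0_pi_le[of p "pi / 3"] pi_gt3 by (simp add: cos_60)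

lemma tan_le_two_mult:
  fixes p :: real
  assumes "0 < p" "p \<le> 1"
  shows "tan p \<le> 2 * p"
proof -
  have "tan p = sin p / cos p" by (simp add: tan_def)
  also have "\<dots> \<le> p / (1/2)"
    using assms cos_ge_half[of p] sin_x_le_x[of p] sin_gt_zero[of p] pi_gt3 by (intro frac_le) auto
  finally show ?thesis by simp
qed

lemma one_sub_cos_le: "1 - cos p \<le> \<bar>p::real\<bar>"
  using vector_differentiable_bound[of UNIV cos "\<lambda>x. - sin x" 1 p 0]
  by (auto simp flip: has_real_derivative_iff_has_vector_derivative intro!: derivative_eq_intros)

lemma cot_ge_half:
  fixes p :: real
  assumes "0 < p" "p \<le> 1"
  shows "1/2 \<le> cot p"
proof -
  have "0 < sin p"
    using assms pi_gt3 by (intro sin_gt_zero) auto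
  then have "cos p \<le> cos p / sin p"
    using cos_ge_half[of p] assms sin_le_one[of p] by (simp add: le_divide_eq)
  then show ?thesis
    unfolding cot_def using cos_ge_half[of p] assms by linarith
qed

lemma cos_powr_minus_half_bounds:
  fixes p :: real
  assumes "0 \<le> p" "p \<le> 1"
  shows "1 \<le> cos p powr (-1/2)" "cos p powr (-1/2) \<le> 1 / cos p"
proof -
  have c: "1/2 \<le> cos p" "cos p \<le> 1"
    using cos_ge_half[OF assms] by auto
  have eq: "cos p powr (-1/2) = 1 / sqrt (cos p)"
    using c by (simp add: powr_minus_divide powr_half_sqrt)
  have "cos p \<le> sqrt (cos p)" "sqrt (cos p) \<le> 1" "0 < sqrt (cos p)"
    using c by (auto simp: real_le_rsqrt power2_eq_square mult_le_cancel_left1)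
  then show "1 \<le> cos p powr (-1/2)" "cos p powr (-1/2) \<le> 1 / cos p"
    unfolding eq using c by (auto intro: divide_left_mono)
qed

lemma norm_exp_ii_sub_one_le: "cmod (exp (\<i> * of_real \<theta>) - 1) \<le> \<bar>\<theta>\<bar>"
  using dist_exp_i_1[of \<theta>] abs_sin_x_le_abs_x[of "\<theta> / 2"] by (simp add: dist_norm)

lemma cmod_ii_minus_1: "cmod (\<i> - 1) = sqrt 2"
  by (simp add: cmod_def)

section \<open>Schwartz functions\<close>

lemma schwartz_has_real_derivative:
  "schwartz g \<Longrightarrow> ((deriv ^^ n) g has_real_derivative (deriv ^^ Suc n) g x) (at x)"
  unfolding schwartz_def by blast

lemma schwartz_bounded: "schwartz g \<Longrightarrow> \<exists>C. \<forall>x. \<bar>x ^ m * (deriv ^^ n) g x\<bar> \<le> C"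
  unfolding schwartz_def by blast

lemma schwartz_continuous_on: "schwartz g \<Longrightarrow> continuous_on UNIV ((deriv ^^ n) g)"
  by (meson DERIV_isCont continuous_at_imp_continuous_on schwartz_has_real_derivative)

lemma schwartz_measurable: "schwartz g \<Longrightarrow> (deriv ^^ n) g \<in> borel_measurable borel"
  by (simp add: borel_measurable_continuous_onI schwartz_continuous_on)

lemma schwartz_deriv: "schwartz g \<Longrightarrow> schwartz (deriv g)"
  unfolding schwartz_def by (metis comp_apply funpow_Suc_right)

lemma funpow_deriv_times_id:
  assumes "schwartz g"
  shows "(deriv ^^ n) (\<lambda>w. w * g w) = (\<lambda>w. w * (deriv ^^ n) g w + of_nat n * (deriv ^^ (n - 1)) g w)"
proof (induction n)
  case 0
  then show ?case by simp
next
  case (Suc n)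
  have "((\<lambda>w. w * (deriv ^^ n) g w + of_nat n * (deriv ^^ (n - 1)) g w) has_real_derivative
          x * (deriv ^^ Suc n) g x + of_nat (Suc n) * (deriv ^^ n) g x) (at x)" for x
    using schwartz_has_real_derivative[OF assms, of n x] schwartz_has_real_derivative[OF assms, of "n - 1" x]
    by (cases n) (auto intro!: derivative_eq_intros simp: algebra_simps)
  then show ?case
    by (auto simp: fun_eq_iff Suc.IH intro: DERIV_imp_deriv)
qed

lemma schwartz_times_id:
  assumes "schwartz g"
  shows "schwartz (\<lambda>w. w * g w)"
  unfolding schwartz_def funpow_deriv_times_id[OF assms]
proof safe
  fix n x
  show "((\<lambda>w. w * (deriv ^^ n) g w + of_nat n * (deriv ^^ (n - 1)) g w) has_real_derivative
          x * (deriv ^^ Suc n) g x + of_nat (Suc n) * (deriv ^^ (Suc n - 1)) g x) (at x)"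
    using schwartz_has_real_derivative[OF assms, of n x] schwartz_has_real_derivative[OF assms, of "n - 1" x]
    by (cases n) (auto intro!: derivative_eq_intros simp: algebra_simps)
next
  fix m n
  obtain C1 where C1: "\<And>x. \<bar>x ^ Suc m * (deriv ^^ n) g x\<bar> \<le> C1"
    using schwartz_bounded[OF assms] by blast
  obtain C2 where C2: "\<And>x. \<bar>x ^ m * (deriv ^^ (n - 1)) g x\<bar> \<le> C2"
    using schwartz_bounded[OF assms] by blast
  have "\<bar>x ^ m * (x * (deriv ^^ n) g x + of_nat n * (deriv ^^ (n - 1)) g x)\<bar> \<le> C1 + of_nat n * C2" for x
  proof -
    have "\<bar>x ^ m * (x * (deriv ^^ n) g x + of_nat n * (deriv ^^ (n - 1)) g x)\<bar>
        = \<bar>x ^ Suc m * (deriv ^^ n) g x + of_nat n * (x ^ m * (deriv ^^ (n - 1)) g x)\<bar>"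
      by (simp add: algebra_simps)
    also have "\<dots> \<le> \<bar>x ^ Suc m * (deriv ^^ n) g x\<bar> + of_nat n * \<bar>x ^ m * (deriv ^^ (n - 1)) g x\<bar>"
      by (metis abs_mult abs_of_nat abs_triangle_ineq)
    also have "\<dots> \<le> C1 + of_nat n * C2"
      using C1 C2 by (intro add_mono mult_left_mono) auto
    finally show ?thesis .
  qed
  then show "\<exists>C. \<forall>x. \<bar>x ^ m * (x * (deriv ^^ n) g x + of_nat n * (deriv ^^ (n - 1)) g x)\<bar> \<le> C"
    by blast
qed

lemma schwartz_weighted_bounded:
  assumes "schwartz g"
  shows "\<exists>C. \<forall>x. \<bar>x\<bar> ^ m * (1 + \<bar>x\<bar> ^ k) * \<bar>(deriv ^^ n) g x\<bar> \<le> C"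
proof -
  obtain C1 where C1: "\<And>x. \<bar>x ^ m * (deriv ^^ n) g x\<bar> \<le> C1"
    using schwartz_bounded[OF assms] by blast
  obtain C2 where C2: "\<And>x. \<bar>x ^ (m + k) * (deriv ^^ n) g x\<bar> \<le> C2"
    using schwartz_bounded[OF assms] by blast
  have "\<bar>x\<bar> ^ m * (1 + \<bar>x\<bar> ^ k) * \<bar>(deriv ^^ n) g x\<bar>
      = \<bar>x ^ m * (deriv ^^ n) g x\<bar> + \<bar>x ^ (m + k) * (deriv ^^ n) g x\<bar>" for x
    by (simp add: algebra_simps abs_mult power_abs power_add)
  then show ?thesis
    using C1 C2 by (metis add_mono)
qed

lemma schwartz_powr_weighted_bounded:
  assumes "schwartz g" "\<sigma> > 0"
  shows "\<exists>C. \<forall>x. \<bar>x\<bar> ^ m * (1 + \<bar>x\<bar> powr \<sigma>) * \<bar>(deriv ^^ n) g x\<bar> \<le> C"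
proof -
  obtain C where C: "\<And>x. \<bar>x\<bar> ^ m * (1 + \<bar>x\<bar> ^ nat \<lceil>\<sigma>\<rceil>) * \<bar>(deriv ^^ n) g x\<bar> \<le> C"
    using schwartz_weighted_bounded[OF assms(1)] by blast
  have "\<bar>x\<bar> ^ m * (1 + \<bar>x\<bar> powr \<sigma>) * \<bar>(deriv ^^ n) g x\<bar> \<le> 2 * C" for x
    using mult_left_mono[OF one_plus_powr_le_power[OF assms(2), of x], of "\<bar>x\<bar> ^ m * \<bar>(deriv ^^ n) g x\<bar>"] C[of x]
    by (simp add: algebra_simps)
  then show ?thesis by blast
qed

lemma schwartz_moment_integrable:
  assumes "schwartz g"
  shows "integrable lborel (\<lambda>x. x ^ m * (deriv ^^ n) g x)"
proof -
  obtain C where C: "\<And>x. \<bar>x\<bar> ^ m * (1 + \<bar>x\<bar> ^ 2) * \<bar>(deriv ^^ n) g x\<bar> \<le> C"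
    using schwartz_weighted_bounded[OF assms] by blast
  show ?thesis
  proof (rule Bochner_Integration.integrable_bound)
    show "integrable lborel (\<lambda>x. \<bar>C\<bar> * inverse (1 + x\<^sup>2))"
      using integrable_inverse_1_plus_square by (simp add: set_integrable_def)
    show "(\<lambda>x. x ^ m * (deriv ^^ n) g x) \<in> borel_measurable lborel"
      using schwartz_measurable[OF assms, of n] by measurable
    have "\<bar>x ^ m * (deriv ^^ n) g x\<bar> \<le> \<bar>C\<bar> * inverse (1 + x\<^sup>2)" for x
    proof -
      have "\<bar>x ^ m * (deriv ^^ n) g x\<bar> \<le> C * inverse (1 + x\<^sup>2)"
        using C[of x] by (simp add: field_simps abs_mult power_abs add_pos_nonneg)
      also have "\<dots> \<le> \<bar>C\<bar> * inverse (1 + x\<^sup>2)"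
        by (intro mult_right_mono) (auto simp: add_pos_nonneg)
      finally show ?thesis .
    qed
    then show "AE x in lborel. norm (x ^ m * (deriv ^^ n) g x) \<le> norm (\<bar>C\<bar> * inverse (1 + x\<^sup>2))"
      by (simp add: abs_mult)
  qed
qed

lemma schwartz_integrable: "schwartz g \<Longrightarrow> integrable lborel g"
  using schwartz_moment_integrable[of g 0 0] by simp

lemma schwartz_shifted_moment_integrable:
  assumes "schwartz g"
  shows "integrable lborel (\<lambda>w. (w - x) ^ m * g w)"
proof -
  have "(\<lambda>w. (w - x) ^ m * g w) =
        (\<lambda>w. \<Sum>k\<le>m. of_nat (m choose k) * (- x) ^ (m - k) * (w ^ k * g w))"
    by (simp add: fun_eq_iff binomial_ring[of _ "- x", simplified] sum_distrib_left ac_simps)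
  moreover have "integrable lborel (\<lambda>w. w ^ k * g w)" for k
    using schwartz_moment_integrable[OF assms, of k 0] by simp
  ultimately show ?thesis
    by (simp add: integrable_sum)
qed

lemma schwartz_tendsto_0:
  assumes "schwartz g" and F: "F = at_top \<or> F = at_bot"
  shows "(g \<longlongrightarrow> 0) F"
proof -
  obtain C where C: "\<And>x. \<bar>x ^ 1 * (deriv ^^ 0) g x\<bar> \<le> C"
    using schwartz_bounded[OF assms(1)] by blast
  show ?thesis
  proof (rule Lim_null_comparison)
    have "\<forall>\<^sub>F x in F. x \<noteq> 0"
      using F by (auto intro: eventually_at_top_not_equal eventually_at_bot_not_equal)
    then show "\<forall>\<^sub>F x in F. norm (g x) \<le> C / \<bar>x\<bar>"
      by eventually_elim (use C in \<open>simp add: field_simps abs_mult\<close>)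
    show "((\<lambda>x. C / \<bar>x\<bar>) \<longlongrightarrow> 0) F"
      using F by (elim disjE) (simp_all, real_asymp+)
  qed
qed

lemma abs_le_abs_between_dilation:
  fixes t \<xi> :: real
  assumes "0 < c" "c \<le> 1" "\<xi> \<in> {min t (t / c) .. max t (t / c)}"
  shows "\<bar>t\<bar> \<le> \<bar>\<xi>\<bar>"
proof (cases "0 \<le> t")
  case True
  then have "t \<le> t / c" using assms by (simp add: le_divide_eq mult_left_le)
  then show ?thesis using assms True by auto
next
  case False
  then have "t / c \<le> t" using assms by (simp add: divide_le_eq mult_le_cancel_left1)
  then show ?thesis using assms False by auto
qed

lemma schwartz_dilation_sub_le:
  assumes f: "schwartz f" and \<sigma>: "\<sigma> > 0"
  shows "\<exists>C. \<forall>c t. 1/2 \<le> c \<longrightarrow> c \<le> 1 \<longrightarrow> \<bar>f (t / c) - f t\<bar> * (1 + \<bar>t\<bar> powr \<sigma>) \<le> C * (1 - c)"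
proof -
  obtain Q where Q: "\<And>y. \<bar>y\<bar> ^ 1 * (1 + \<bar>y\<bar> powr \<sigma>) * \<bar>(deriv ^^ 1) f y\<bar> \<le> Q"
    using schwartz_powr_weighted_bounded[OF f \<sigma>] by blast
  have "\<bar>f (t / c) - f t\<bar> * (1 + \<bar>t\<bar> powr \<sigma>) \<le> 2 * Q * (1 - c)" if c: "1/2 \<le> c" "c \<le> 1" for c t
  proof (cases "t = 0")
    case True
    then show ?thesis using Q[of 0] c by simp
  next
    case False
    let ?S = "{min t (t / c) .. max t (t / c)}"
    let ?W = "\<bar>t\<bar> * (1 + \<bar>t\<bar> powr \<sigma>)"
    have W: "0 < ?W" using False by (simp add: add_pos_nonneg)
    have "\<bar>deriv f \<xi>\<bar> * ?W \<le> Q" if "\<xi> \<in> ?S" for \<xi>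
    proof -
      have "?W \<le> \<bar>\<xi>\<bar> * (1 + \<bar>\<xi>\<bar> powr \<sigma>)"
        using abs_le_abs_between_dilation[OF _ _ that] c \<sigma>
        by (intro mult_mono add_left_mono powr_mono2) auto
      then have "\<bar>deriv f \<xi>\<bar> * ?W \<le> \<bar>\<xi>\<bar> ^ 1 * (1 + \<bar>\<xi>\<bar> powr \<sigma>) * \<bar>(deriv ^^ 1) f \<xi>\<bar>"
        by (simp add: mult_left_mono mult.commute)
      then show ?thesis
        using Q[of \<xi>] by linarith
    qed
    moreover have "t / c \<in> ?S" "t \<in> ?S"
      by auto
    ultimately have "norm (f (t / c) - f t) \<le> (Q / ?W) * \<bar>t / c - t\<bar>"
      using W schwartz_has_real_derivative[OF f, of 0]
      by (intro vector_differentiable_bound[of ?S f "deriv f"])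
         (auto simp: le_divide_eq has_real_derivative_iff_has_vector_derivative has_vector_derivative_at_within)
    also have "t / c - t = t * ((1 - c) / c)"
      using c by (simp add: field_simps)
    also have "\<bar>t * ((1 - c) / c)\<bar> = \<bar>t\<bar> * ((1 - c) / c)"
      using c by (simp add: abs_mult)
    also have "(Q / ?W) * (\<bar>t\<bar> * ((1 - c) / c)) = Q * ((1 - c) / c) / (1 + \<bar>t\<bar> powr \<sigma>)"
      using False by (simp add: divide_simps)
    also have "\<dots> \<le> Q * (2 * (1 - c)) / (1 + \<bar>t\<bar> powr \<sigma>)"
    proof (intro divide_right_mono mult_left_mono)
      have "(1 - c) * (1 / c) \<le> (1 - c) * 2"
        using c by (intro mult_left_mono) (auto simp: field_simps)
      then show "(1 - c) / c \<le> 2 * (1 - c)" by simp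
      show "0 \<le> Q" using Q[of 0] by simp
    qed simp
    finally show ?thesis
      by (simp add: field_simps add_pos_nonneg)
  qed
  then show ?thesis by blast
qed

section \<open>The Gaussian kernel at complex time\<close>

text \<open>For real \<open>s > 0\<close> this is the normal density with mean \<open>x\<close> and variance \<open>s / (2 * pi)\<close>;
  \<open>powr\<close> is the principal branch.\<close>

definition heat_kernel :: "complex \<Rightarrow> real \<Rightarrow> real \<Rightarrow> complex" where
  "heat_kernel s x w = s powr (-1/2) * exp (- of_real pi * (of_real (w - x))\<^sup>2 / s)"

definition heat_transform :: "complex \<Rightarrow> (real \<Rightarrow> real) \<Rightarrow> real \<Rightarrow> complex" where
  "heat_transform s g x = (LINT w|lborel. heat_kernel s x w * of_real (g w))"

lemma norm_heat_kernel_le: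
  assumes "0 \<le> Re s" "s \<noteq> 0"
  shows "cmod (heat_kernel s x w) \<le> cmod s powr (-1/2)"
proof -
  have "Re (- of_real pi * (of_real (w - x))\<^sup>2 / s) = - pi * (w - x)\<^sup>2 * Re s / (cmod s)\<^sup>2"
    by (simp add: Re_divide cmod_power2 flip: of_real_diff of_real_power)
  also have "\<dots> \<le> 0"
    using assms by (simp add: divide_nonpos_nonneg mult_nonneg_nonneg)
  finally have "cmod (exp (- of_real pi * (of_real (w - x))\<^sup>2 / s)) \<le> 1"
    by (simp add: norm_exp_eq_Re)
  moreover have "cmod (s powr (-1/2)) = cmod s powr (-1/2)"
    by (subst norm_powr_real_powr') auto
  ultimately show ?thesis
    unfolding heat_kernel_def norm_mult by (metis mult.right_neutral mult_left_mono norm_ge_zero)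
qed

lemma continuous_on_heat_kernel: "continuous_on UNIV (heat_kernel s x)"
  by (cases "s = 0") (auto simp: heat_kernel_def intro!: continuous_intros)

lemma heat_kernel_measurable [measurable]: "heat_kernel s x \<in> borel_measurable borel"
  by (rule borel_measurable_continuous_onI[OF continuous_on_heat_kernel])

lemma heat_kernel_has_vector_derivative:
  assumes "s \<noteq> 0"
  shows "(heat_kernel s x has_vector_derivative
           - 2 * of_real pi * of_real (w - x) / s * heat_kernel s x w) (at w)"
proof -
  have "((\<lambda>z. s powr (-1/2) * exp (- of_real pi * (z - of_real x)\<^sup>2 / s)) has_field_derivative
        - 2 * of_real pi * (of_real w - of_real x) / s *
          (s powr (-1/2) * exp (- of_real pi * (of_real w - of_real x)\<^sup>2 / s))) (at (of_real w))"
    using assms by (auto intro!: derivative_eq_intros simp: field_simps power2_eq_square)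
  from has_vector_derivative_real_field[OF this]
  show ?thesis unfolding heat_kernel_def by (simp add: algebra_simps)
qed

lemma integrable_heat_kernel_mult:
  assumes "0 \<le> Re s" "s \<noteq> 0" "integrable lborel p"
  shows "integrable lborel (\<lambda>w. heat_kernel s x w * of_real (p w))"
proof (rule Bochner_Integration.integrable_bound)
  show "integrable lborel (\<lambda>w. cmod s powr (-1/2) * \<bar>p w\<bar>)"
    using assms(3) by (intro integrable_mult_right integrable_abs)
  show "(\<lambda>w. heat_kernel s x w * of_real (p w)) \<in> borel_measurable lborel"
    using assms(3) by measurable
  show "AE w in lborel. norm (heat_kernel s x w * of_real (p w)) \<le> norm (cmod s powr (-1/2) * \<bar>p w\<bar>)"
    using norm_heat_kernel_le[OF assms(1,2)] by (auto simp: norm_mult intro!: mult_right_mono)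
qed

lemma norm_heat_transform_le:
  assumes "0 \<le> Re s" "s \<noteq> 0" "integrable lborel p"
  shows "cmod (heat_transform s p x) \<le> cmod s powr (-1/2) * (LINT w|lborel. \<bar>p w\<bar>)"
proof -
  have "cmod (heat_transform s p x) \<le> (LINT w|lborel. cmod (heat_kernel s x w * of_real (p w)))"
    unfolding heat_transform_def by (rule integral_norm_bound)
  also have "\<dots> \<le> (LINT w|lborel. cmod s powr (-1/2) * \<bar>p w\<bar>)"
    using norm_heat_kernel_le[OF assms(1,2)] assms
    by (intro integral_mono integrable_heat_kernel_mult integrable_norm integrable_mult_right integrable_abs)
       (auto simp: norm_mult intro!: mult_right_mono)
  finally show ?thesis by simp
qed

lemma heat_transform_linear:
  assumes "0 \<le> Re s" "s \<noteq> 0" "integrable lborel p" "integrable lborel q"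
  shows "heat_transform s (\<lambda>w. a * p w + b * q w) x =
         of_real a * heat_transform s p x + of_real b * heat_transform s q x"
  unfolding heat_transform_def
  using integrable_heat_kernel_mult[OF assms(1,2,3)] integrable_heat_kernel_mult[OF assms(1,2,4)]
  by (simp add: algebra_simps)

lemma heat_transform_by_parts:
  assumes s: "0 \<le> Re s" "s \<noteq> 0" and h: "schwartz h"
  shows "heat_transform s (\<lambda>w. (w - x) * h w) x = s / (2 * of_real pi) * heat_transform s (deriv h) x"
proof -
  let ?K = "heat_kernel s x"
  define f where "f w = - 2 * of_real pi / s * (?K w * of_real ((w - x) * h w)) + ?K w * of_real (deriv h w)" for w
  have der: "((\<lambda>w. ?K w * of_real (h w)) has_vector_derivative f w) (at w)" for w
  proof -
    have "(h has_real_derivative deriv h w) (at w)"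
      using schwartz_has_real_derivative[OF h, of 0 w] by simp
    then show ?thesis
      unfolding f_def
      by (intro has_vector_derivative_eq_rhs[OF has_vector_derivative_mult[OF
            heat_kernel_has_vector_derivative[OF s(2)] has_vector_derivative_of_real]])
         (use s(2) in \<open>auto simp: field_simps\<close>)
  qed
  have int1: "integrable lborel (\<lambda>w. ?K w * of_real ((w - x) * h w))"
    using integrable_heat_kernel_mult[OF s schwartz_shifted_moment_integrable[OF h, of x 1]] by simp
  have int2: "integrable lborel (\<lambda>w. ?K w * of_real (deriv h w))"
    using integrable_heat_kernel_mult[OF s schwartz_moment_integrable[OF h, of 0 1]] by simp
  have "continuous_on UNIV h" "continuous_on UNIV (deriv h)"
    using schwartz_continuous_on[OF h, of 0] schwartz_continuous_on[OF h, of 1] by simp_all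
  then have cont: "continuous_on UNIV f"
    unfolding f_def by (intro continuous_intros continuous_on_heat_kernel) (auto simp: s(2))
  obtain c where c: "\<And>w. cmod (?K w) \<le> c"
    using norm_heat_kernel_le[OF s] by blast
  have lim: "((\<lambda>w. ?K w * of_real (h w)) \<longlongrightarrow> 0) F" if "F = at_top \<or> F = at_bot" for F
  proof (rule Lim_null_comparison)
    show "\<forall>\<^sub>F w in F. norm (?K w * of_real (h w)) \<le> c * \<bar>h w\<bar>"
      using c by (auto simp: norm_mult intro!: mult_right_mono always_eventually)
    show "((\<lambda>w. c * \<bar>h w\<bar>) \<longlongrightarrow> 0) F"
      using tendsto_mult_left[OF tendsto_rabs_zero[OF schwartz_tendsto_0[OF h that]], of c] by simp
  qed
  have "integrable lborel f"
    unfolding f_def by (intro Bochner_Integration.integrable_add integrable_mult_right int1 int2)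
  then have "(LINT w|lborel. f w) = 0"
    by (intro integral_eq_0_if_antiderivative_vanishes_at_infinity[OF der cont _ lim lim]) auto
  moreover have "(LINT w|lborel. f w) =
      - 2 * of_real pi / s * heat_transform s (\<lambda>w. (w - x) * h w) x + heat_transform s (deriv h) x"
    unfolding f_def heat_transform_def using int1 int2 by simp
  ultimately show ?thesis
    using s(2) by (simp add: field_simps)
qed

lemma heat_transform_shift_mult:
  assumes "0 \<le> Re s" "s \<noteq> 0" "integrable lborel p" "integrable lborel (\<lambda>w. w * p w)"
  shows "heat_transform s (\<lambda>w. (w - x) * p w) x =
         heat_transform s (\<lambda>w. w * p w) x - of_real x * heat_transform s p x"
proof -
  have eq: "(\<lambda>w. (w - x) * p w) = (\<lambda>w. 1 * (w * p w) + (- x) * p w)"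
    by (simp add: fun_eq_iff algebra_simps)
  show ?thesis
    unfolding eq heat_transform_linear[OF assms(1,2,4,3)] by simp
qed

lemma heat_transform_times_id:
  assumes s: "0 \<le> Re s" "s \<noteq> 0" and g: "schwartz g"
  shows "of_real x * heat_transform s g x =
         heat_transform s (\<lambda>w. w * g w) x - s / (2 * of_real pi) * heat_transform s (deriv g) x"
  using heat_transform_by_parts[OF s g, of x]
    heat_transform_shift_mult[OF s schwartz_integrable[OF g], of x] schwartz_moment_integrable[OF g, of 1 0]
  by simp

lemma heat_transform_shift_square:
  assumes s: "0 \<le> Re s" "s \<noteq> 0" and g: "schwartz g"
  shows "heat_transform s (\<lambda>w. (w - x)\<^sup>2 * g w) x =
     s / (2 * of_real pi) * (heat_transform s g x + s / (2 * of_real pi) * heat_transform s (deriv (deriv g)) x)"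
proof -
  let ?H = "\<lambda>p. heat_transform s p x"
  have g': "schwartz (deriv g)" and wg: "schwartz (\<lambda>w. w * g w)"
    using g by (simp_all add: schwartz_deriv schwartz_times_id)
  have int_shift: "integrable lborel (\<lambda>w. (w - x) * p w)" if "schwartz p" for p
    using schwartz_shifted_moment_integrable[OF that, of x 1] by simp
  have deriv_wg: "deriv (\<lambda>w. w * g w) = (\<lambda>w. 1 * (w * deriv g w) + 1 * g w)"
    using funpow_deriv_times_id[OF g, of 1] by simp
  have eq: "(\<lambda>w. (w - x)\<^sup>2 * g w) = (\<lambda>w. 1 * ((w - x) * (w * g w)) + (- x) * ((w - x) * g w))"
    by (simp add: fun_eq_iff algebra_simps power2_eq_square)
  have "?H (\<lambda>w. (w - x)\<^sup>2 * g w) = ?H (\<lambda>w. (w - x) * (w * g w)) - of_real x * ?H (\<lambda>w. (w - x) * g w)"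
    unfolding eq heat_transform_linear[OF s int_shift[OF wg] int_shift[OF g]] by simp
  also have "\<dots> = s / (2 * of_real pi) * (?H (deriv (\<lambda>w. w * g w)) - of_real x * ?H (deriv g))"
    by (simp only: heat_transform_by_parts[OF s wg] heat_transform_by_parts[OF s g])
       (simp add: right_diff_distrib)
  also have "?H (deriv (\<lambda>w. w * g w)) = ?H (\<lambda>w. w * deriv g w) + ?H g"
    using heat_transform_linear[OF s _ schwartz_integrable[OF g], of "\<lambda>w. w * deriv g w" 1 1]
      schwartz_moment_integrable[OF g', of 1 0]
    by (simp add: deriv_wg)
  also have "?H (\<lambda>w. w * deriv g w) + ?H g - of_real x * ?H (deriv g) =
             ?H g + s / (2 * of_real pi) * ?H (deriv (deriv g))"
    using heat_transform_shift_mult[OF s schwartz_integrable[OF g']] schwartz_moment_integrable[OF g', of 1 0]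
      heat_transform_by_parts[OF s g']
    by simp
  finally show ?thesis .
qed

definition heat_kernel_deriv :: "complex \<Rightarrow> real \<Rightarrow> real \<Rightarrow> complex" where
  "heat_kernel_deriv s x w = (- 1 / (2 * s) + of_real pi * (of_real (w - x))\<^sup>2 / s\<^sup>2) * heat_kernel s x w"

lemma heat_kernel_has_field_derivative_time:
  assumes "s \<notin> \<real>\<^sub>\<le>\<^sub>0"
  shows "((\<lambda>s. heat_kernel s x w) has_field_derivative heat_kernel_deriv s x w) (at s)"
proof -
  have s: "s \<noteq> 0" using assms by auto
  have "s powr (a - 1) = s powr a / s" for a
    using s by (simp add: powr_def exp_diff left_diff_distrib)
  from this[of "-1/2"] have "(-1/2) * s powr (-1/2 - 1) * exp (- of_real pi * (of_real (w - x))\<^sup>2 / s) +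
      s powr (-1/2) * (exp (- of_real pi * (of_real (w - x))\<^sup>2 / s) * (of_real pi * (of_real (w - x))\<^sup>2 / s\<^sup>2))
      = heat_kernel_deriv s x w"
    unfolding heat_kernel_deriv_def heat_kernel_def using s by (simp add: field_simps)
  then show ?thesis
    unfolding heat_kernel_def using assms s
    by (auto intro!: derivative_eq_intros simp: power2_eq_square field_simps)
qed

lemma integral_heat_kernel_deriv:
  assumes s: "0 \<le> Re s" "s \<noteq> 0" and g: "schwartz g"
  shows "(LINT w|lborel. heat_kernel_deriv s x w * of_real (g w)) =
         heat_transform s (deriv (deriv g)) x / (4 * of_real pi)"
proof -
  have int0: "integrable lborel (\<lambda>w. heat_kernel s x w * of_real (g w))"
    by (rule integrable_heat_kernel_mult[OF s schwartz_integrable[OF g]])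
  have int2: "integrable lborel (\<lambda>w. heat_kernel s x w * of_real ((w - x)\<^sup>2 * g w))"
    by (rule integrable_heat_kernel_mult[OF s schwartz_shifted_moment_integrable[OF g]])
  have "(LINT w|lborel. heat_kernel_deriv s x w * of_real (g w)) =
     (LINT w|lborel. - 1 / (2 * s) * (heat_kernel s x w * of_real (g w)) +
        of_real pi / s\<^sup>2 * (heat_kernel s x w * of_real ((w - x)\<^sup>2 * g w)))"
    unfolding heat_kernel_deriv_def by (intro Bochner_Integration.integral_cong) (auto simp: algebra_simps)
  also have "\<dots> = - 1 / (2 * s) * heat_transform s g x +
      of_real pi / s\<^sup>2 * heat_transform s (\<lambda>w. (w - x)\<^sup>2 * g w) x"
    unfolding heat_transform_def using int0 int2 by simp
  also have "\<dots> = heat_transform s (deriv (deriv g)) x / (4 * of_real pi)"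
    unfolding heat_transform_shift_square[OF s g] using s(2) by (simp add: field_simps power2_eq_square)
  finally show ?thesis .
qed

section \<open>From real to imaginary time\<close>

definition time_path :: "real \<Rightarrow> real \<Rightarrow> complex" where
  "time_path l t = (of_real (1 - t) + \<i> * of_real t) / of_real l"

lemma time_path_has_vector_derivative: "(time_path l has_vector_derivative (\<i> - 1) / of_real l) (at t)"
  unfolding time_path_def by (auto intro!: derivative_eq_intros simp: field_simps)

lemma time_path_0: "time_path l 0 = of_real (1 / l)"
  and time_path_1: "time_path l 1 = \<i> / of_real l"
  by (simp_all add: time_path_def field_simps)

lemma Re_time_path: "Re (time_path l t) = (1 - t) / l"
  and Im_time_path: "Im (time_path l t) = t / l"
  by (simp_all add: time_path_def)

context
  fixes l t :: real
  assumes l: "l > 0" and t: "0 \<le> t" "t \<le> 1"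
begin

lemma Re_time_path_nonneg: "0 \<le> Re (time_path l t)"
  using l t by (simp add: Re_time_path)

lemma time_path_not_nonpos_Reals: "time_path l t \<notin> \<real>\<^sub>\<le>\<^sub>0"
  using l t by (auto simp: complex_nonpos_Reals_iff Re_time_path Im_time_path field_simps)

lemma time_path_nonzero: "time_path l t \<noteq> 0"
  using time_path_not_nonpos_Reals by force

lemma norm_time_path_ge: "1 / (2 * l) \<le> cmod (time_path l t)"
proof -
  have "1 / (2 * l) \<le> max ((1 - t) / l) (t / l)"
    using l t by (auto simp: field_simps max_def)
  also have "\<dots> \<le> cmod (time_path l t)"
    using abs_Re_le_cmod[of "time_path l t"] abs_Im_le_cmod[of "time_path l t"] l t
    by (auto simp: Re_time_path Im_time_path)
  finally show ?thesis .
qed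

lemma norm_time_path_powr_le: "cmod (time_path l t) powr (-1/2) \<le> sqrt (2 * l)"
proof -
  have "cmod (time_path l t) powr (-1/2) \<le> (1 / (2 * l)) powr (-1/2)"
    by (rule powr_mono2') (use norm_time_path_ge l in auto)
  also have "\<dots> = sqrt (2 * l)"
    using l by (simp add: powr_minus_divide powr_half_sqrt[symmetric] powr_divide)
  finally show ?thesis .
qed

lemma norm_heat_kernel_time_path_le: "cmod (heat_kernel (time_path l t) x w) \<le> sqrt (2 * l)"
  using norm_heat_kernel_le[OF Re_time_path_nonneg time_path_nonzero] norm_time_path_powr_le
  by (rule order_trans)

lemma heat_kernel_time_path_has_vector_derivative:
  "((\<lambda>t. heat_kernel (time_path l t) x w) has_vector_derivative
     (\<i> - 1) / of_real l * heat_kernel_deriv (time_path l t) x w) (at t)"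
  using field_vector_diff_chain_at[OF time_path_has_vector_derivative
      heat_kernel_has_field_derivative_time[OF time_path_not_nonpos_Reals]]
  by (simp add: o_def)

lemma norm_heat_kernel_deriv_time_path_le:
  "cmod (heat_kernel_deriv (time_path l t) x w) \<le> (l + 4 * pi * l\<^sup>2 * (w - x)\<^sup>2) * sqrt (2 * l)"
proof -
  let ?s = "time_path l t"
  have "0 < 1 / (2 * l)"
    using l by simp
  then have "0 < cmod ?s"
    using norm_time_path_ge by linarith
  then have inv: "1 / cmod ?s \<le> 2 * l"
    using norm_time_path_ge l by (simp add: field_simps)
  then have inv2: "1 / (cmod ?s)\<^sup>2 \<le> 4 * l\<^sup>2"
    using power_mono[OF inv, of 2] by (simp add: power_divide power_mult_distrib)
  have "cmod (- 1 / (2 * ?s) + of_real pi * (of_real (w - x))\<^sup>2 / ?s\<^sup>2)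
      \<le> (1 / cmod ?s) / 2 + pi * (w - x)\<^sup>2 * (1 / (cmod ?s)\<^sup>2)"
    using norm_triangle_ineq[of "- 1 / (2 * ?s)" "of_real pi * (of_real (w - x))\<^sup>2 / ?s\<^sup>2"]
    by (simp add: norm_divide norm_mult norm_power flip: of_real_diff)
  also have "\<dots> \<le> l + pi * (w - x)\<^sup>2 * (4 * l\<^sup>2)"
    using inv inv2 by (intro add_mono mult_left_mono) auto
  finally show ?thesis
    unfolding heat_kernel_deriv_def norm_mult
    using norm_heat_kernel_time_path_le l by (intro mult_mono) (auto simp: algebra_simps)
qed

end

lemma heat_transform_time_path_has_vector_derivative:
  assumes l: "l > 0" and t: "0 < t" "t < 1" and g: "schwartz g"
  shows "((\<lambda>t. heat_transform (time_path l t) g x) has_vector_derivative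
           (\<i> - 1) / of_real l * heat_transform (time_path l t) (deriv (deriv g)) x / (4 * of_real pi))
         (at t)"
proof -
  define B where "B w = sqrt 2 / l * sqrt (2 * l) * (l * \<bar>g w\<bar> + 4 * pi * l\<^sup>2 * \<bar>(w - x)\<^sup>2 * g w\<bar>)" for w
  have "((\<lambda>t. LINT w|lborel. heat_kernel (time_path l t) x w * of_real (g w)) has_vector_derivative
         (LINT w|lborel. (\<i> - 1) / of_real l * heat_kernel_deriv (time_path l t) x w * of_real (g w)))
         (at t)"
  proof (rule has_vector_derivative_integral[where a=0 and b=1 and B=B])
    fix t w :: real
    assume "0 < t" "t < 1"
    then show "((\<lambda>t. heat_kernel (time_path l t) x w * of_real (g w)) has_vector_derivative
        (\<i> - 1) / of_real l * heat_kernel_deriv (time_path l t) x w * of_real (g w)) (at t)"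
      using has_vector_derivative_mult_right[OF heat_kernel_time_path_has_vector_derivative[OF l],
          of t "of_real (g w)"]
      by (simp add: ac_simps)
    have "cmod ((\<i> - 1) / of_real l * heat_kernel_deriv (time_path l t) x w * of_real (g w))
        = sqrt 2 / l * cmod (heat_kernel_deriv (time_path l t) x w) * \<bar>g w\<bar>"
      using l by (simp add: norm_mult norm_divide cmod_ii_minus_1)
    also have "\<dots> \<le> sqrt 2 / l * ((l + 4 * pi * l\<^sup>2 * (w - x)\<^sup>2) * sqrt (2 * l)) * \<bar>g w\<bar>"
      using norm_heat_kernel_deriv_time_path_le[OF l, of t x w] \<open>0 < t\<close> \<open>t < 1\<close> l
      by (intro mult_right_mono mult_left_mono) auto
    also have "\<dots> = B w" unfolding B_def by (simp add: algebra_simps abs_mult)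
    finally show "cmod ((\<i> - 1) / of_real l * heat_kernel_deriv (time_path l t) x w * of_real (g w)) \<le> B w" .
    show "integrable lborel (\<lambda>w. heat_kernel (time_path l t) x w * of_real (g w))"
      using \<open>0 < t\<close> \<open>t < 1\<close> l
      by (intro integrable_heat_kernel_mult Re_time_path_nonneg time_path_nonzero schwartz_integrable g) auto
  next
    show "integrable lborel B"
      unfolding B_def using schwartz_integrable[OF g] schwartz_shifted_moment_integrable[OF g, of x 2]
      by (intro integrable_mult_right Bochner_Integration.integrable_add integrable_abs) auto
    show "(\<lambda>w. (\<i> - 1) / of_real l * heat_kernel_deriv (time_path l t) x w * of_real (g w))
          \<in> borel_measurable lborel"
      using schwartz_measurable[OF g, of 0] unfolding heat_kernel_deriv_def by simp
  qed (use t in auto)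
  moreover have "(LINT w|lborel. (\<i> - 1) / of_real l * heat_kernel_deriv (time_path l t) x w * of_real (g w))
      = (\<i> - 1) / of_real l * heat_transform (time_path l t) (deriv (deriv g)) x / (4 * of_real pi)"
    using integral_heat_kernel_deriv[OF Re_time_path_nonneg time_path_nonzero g] l t
    by (simp add: mult.assoc)
  ultimately show ?thesis unfolding heat_transform_def by simp
qed

lemma continuous_on_heat_transform_time_path:
  assumes l: "l > 0" and g: "schwartz g"
  shows "continuous_on {0..1} (\<lambda>t. heat_transform (time_path l t) g x)"
  unfolding continuous_on_def heat_transform_def
proof
  fix t0 :: real
  assume t0: "t0 \<in> {0..1}"
  show "((\<lambda>t. LINT w|lborel. heat_kernel (time_path l t) x w * of_real (g w)) \<longlongrightarrow>
         (LINT w|lborel. heat_kernel (time_path l t0) x w * of_real (g w))) (at t0 within {0..1})"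
  proof (rule tendsto_integral_dominated[where B="\<lambda>w. sqrt (2 * l) * \<bar>g w\<bar>"])
    fix w t :: real
    have "continuous (at t0 within {0..1}) (\<lambda>t. heat_kernel (time_path l t) x w)"
      using has_vector_derivative_continuous[OF heat_kernel_time_path_has_vector_derivative[OF l]] t0
      by (auto intro: continuous_at_imp_continuous_at_within)
    then show "((\<lambda>t. heat_kernel (time_path l t) x w * of_real (g w)) \<longlongrightarrow>
        heat_kernel (time_path l t0) x w * of_real (g w)) (at t0 within {0..1})"
      unfolding continuous_within by (intro tendsto_intros)
    show "t \<in> {0..1} \<Longrightarrow> cmod (heat_kernel (time_path l t) x w * of_real (g w)) \<le> sqrt (2 * l) * \<bar>g w\<bar>"
      using norm_heat_kernel_time_path_le[OF l] by (simp add: norm_mult mult_right_mono)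
  qed (use schwartz_measurable[OF g, of 0] schwartz_integrable[OF g] in simp_all)
qed

lemma norm_heat_transform_time_path_sub_le:
  assumes l: "l > 0" and g: "schwartz g" and t: "0 \<le> t" "t \<le> 1"
    and B: "\<And>\<xi>. 0 < \<xi> \<Longrightarrow> \<xi> < 1 \<Longrightarrow> cmod (heat_transform (time_path l \<xi>) (deriv (deriv g)) x) \<le> B"
  shows "cmod (heat_transform (time_path l t) g x - heat_transform (time_path l 0) g x)
         \<le> t * (sqrt 2 / l) * B / (4 * pi)"
proof (cases "t = 0")
  case True
  then show ?thesis by simp
next
  case False
  then have "0 < t" using t by simp
  let ?F = "\<lambda>t. heat_transform (time_path l t) g x"
  let ?D = "\<lambda>t. (\<i> - 1) / of_real l * heat_transform (time_path l t) (deriv (deriv g)) x / (4 * of_real pi)"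
  have cont: "continuous_on {0..t} ?F"
    using continuous_on_heat_transform_time_path[OF l g] by (rule continuous_on_subset) (use t in auto)
  have der: "(?F has_derivative (\<lambda>h. h *\<^sub>R ?D \<xi>)) (at \<xi>)" if "0 < \<xi>" "\<xi> < t" for \<xi>
    using heat_transform_time_path_has_vector_derivative[OF l _ _ g, of \<xi> x] that t
    unfolding has_vector_derivative_def by simp
  have "\<exists>\<xi>\<in>{0<..<t}. norm (?F t - ?F 0) \<le> norm ((t - 0) *\<^sub>R ?D \<xi>)"
    by (rule mvt_general[OF \<open>0 < t\<close> cont]) (use der in simp)
  then obtain \<xi> where \<xi>: "\<xi> \<in> {0<..<t}" "norm (?F t - ?F 0) \<le> norm ((t - 0) *\<^sub>R ?D \<xi>)"
    by blast
  have "norm ((t - 0) *\<^sub>R ?D \<xi>) = t * (sqrt 2 / l) * cmod (heat_transform (time_path l \<xi>) (deriv (deriv g)) x) / (4 * pi)"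
    using \<open>0 < t\<close> l by (simp add: norm_mult norm_divide cmod_ii_minus_1)
  also have "\<dots> \<le> t * (sqrt 2 / l) * B / (4 * pi)"
    using B[of \<xi>] \<xi>(1) t \<open>0 < t\<close> l by (intro divide_right_mono mult_left_mono) auto
  finally show ?thesis
    using \<xi>(2) by simp
qed

lemma heat_transform_of_real:
  assumes "\<tau> > 0"
  shows "heat_transform (of_real \<tau>) g x =
         of_real (LINT w|lborel. normal_density x (sqrt (\<tau> / (2 * pi))) w * g w)"
proof -
  have "(of_real \<tau> :: complex) powr (-1/2) = of_real (\<tau> powr (-1/2))"
    using assms by (subst powr_of_real[symmetric]) auto
  also have "\<tau> powr (-1/2) = 1 / sqrt \<tau>"
    using assms by (simp add: powr_minus_divide powr_half_sqrt)
  finally have "heat_kernel (of_real \<tau>) x w = of_real (1 / sqrt \<tau> * exp (- pi * (w - x)\<^sup>2 / \<tau>))" for w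
    by (simp add: heat_kernel_def flip: exp_of_real)
  moreover have "normal_density x (sqrt (\<tau> / (2 * pi))) w = 1 / sqrt \<tau> * exp (- pi * (w - x)\<^sup>2 / \<tau>)" for w
    using assms unfolding normal_density_def by (simp add: power2_eq_square field_simps)
  ultimately show ?thesis
    unfolding heat_transform_def by (simp flip: of_real_mult)
qed

lemma norm_heat_transform_real_sub_le:
  assumes \<tau>: "\<tau> > 0" and g: "schwartz g" and M: "\<And>y. \<bar>deriv (deriv g) y\<bar> \<le> M"
  shows "cmod (heat_transform (of_real \<tau>) g x - of_real (g x)) \<le> M * \<tau> / (2 * pi)"
proof -
  define \<sigma> where "\<sigma> = sqrt (\<tau> / (2 * pi))"
  have \<sigma>: "0 < \<sigma>" "\<sigma>\<^sup>2 = \<tau> / (2 * pi)"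
    using \<tau> by (simp_all add: \<sigma>_def)
  obtain C where C: "\<And>y. \<bar>g y\<bar> \<le> C"
    using schwartz_bounded[OF g, of 0 0] by auto
  have "integrable lborel (\<lambda>w. normal_density x \<sigma> w * g w)"
  proof (rule Bochner_Integration.integrable_bound[of _ "\<lambda>w. C * normal_density x \<sigma> w"])
    show "AE w in lborel. norm (normal_density x \<sigma> w * g w) \<le> norm (C * normal_density x \<sigma> w)"
      using mult_right_mono[OF C normal_density_nonneg] order_trans[OF abs_ge_zero C]
      by (simp add: abs_mult mult.commute)
  qed (use \<sigma> schwartz_measurable[OF g, of 0] in auto)
  moreover have "\<bar>g w - g x - (w - x) * deriv g x\<bar> \<le> M * (w - x)\<^sup>2" for w
    using schwartz_has_real_derivative[OF g, of 0] schwartz_has_real_derivative[OF g, of 1] M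
    by (intro abs_taylor_remainder_le) auto
  ultimately have "\<bar>(LINT w|lborel. normal_density x \<sigma> w * g w) - g x\<bar> \<le> M * \<sigma>\<^sup>2"
    by (rule abs_normal_expectation_sub_le[OF \<sigma>(1)])
  then show ?thesis
    unfolding heat_transform_of_real[OF \<tau>] \<sigma>_def[symmetric] \<sigma>(2) by (simp flip: of_real_diff)
qed

lemma norm_heat_transform_real_le:
  assumes \<tau>: "\<tau> > 0" and M: "\<And>y. \<bar>g y\<bar> \<le> M"
  shows "cmod (heat_transform (of_real \<tau>) g x) \<le> M"
proof -
  define \<sigma> where "\<sigma> = sqrt (\<tau> / (2 * pi))"
  have \<sigma>: "0 < \<sigma>" using \<tau> by (simp add: \<sigma>_def)
  have "\<bar>LINT w|lborel. normal_density x \<sigma> w * g w\<bar> \<le> (LINT w|lborel. \<bar>normal_density x \<sigma> w * g w\<bar>)"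
    using integral_norm_bound[of lborel "\<lambda>w. normal_density x \<sigma> w * g w"] by simp
  also have "\<dots> \<le> (LINT w|lborel. M * normal_density x \<sigma> w)"
    using mult_right_mono[OF M normal_density_nonneg] order_trans[OF abs_ge_zero M] \<sigma>
    by (intro integral_mono') (auto simp: abs_mult mult.commute)
  also have "\<dots> = M"
    using \<sigma> by simp
  finally show ?thesis
    unfolding heat_transform_of_real[OF \<tau>] \<sigma>_def[symmetric] by simp
qed

text \<open>The crude bound \<open>|K\<^sub>s * h| \<le> |s|\<^sup>-\<^sup>1\<^sup>/\<^sup>2 \<integral>|h|\<close> grows like \<open>sqrt l\<close> along the time path,
  but the path has speed \<open>sqrt 2 / l\<close>, so the mean value theorem applied to \<open>g\<close> and \<open>g''\<close>
  still yields a bound uniform in \<open>l\<close>.\<close>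

lemma norm_heat_transform_time_path_bounded:
  assumes g: "schwartz g"
  shows "\<exists>B. \<forall>l \<xi> x. l \<ge> 1/2 \<longrightarrow> 0 < \<xi> \<longrightarrow> \<xi> < 1 \<longrightarrow> cmod (heat_transform (time_path l \<xi>) g x) \<le> B"
proof -
  obtain M where M: "\<And>y. \<bar>g y\<bar> \<le> M"
    using schwartz_bounded[OF g, of 0 0] by auto
  define g2 where "g2 = deriv (deriv g)"
  have g2: "integrable lborel g2"
    using schwartz_moment_integrable[OF g, of 0 2] by (simp add: g2_def numeral_eq_Suc)
  define I where "I = (LINT w|lborel. \<bar>g2 w\<bar>)"
  have "cmod (heat_transform (time_path l \<xi>) g x) \<le> M + I / pi"
    if l: "l \<ge> 1/2" and \<xi>: "0 < \<xi>" "\<xi> < 1" for l \<xi> x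
  proof -
    have l0: "l > 0" using l by simp
    have "sqrt 2 / l * sqrt (2 * l) = 2 / sqrt l"
      using l0 by (simp add: real_sqrt_mult field_simps)
    also have "\<dots> \<le> 4"
      using l real_le_rsqrt[of "1/2" l] by (simp add: field_simps power2_eq_square)
    finally have velocity: "sqrt 2 / l * sqrt (2 * l) \<le> 4" .
    have "cmod (heat_transform (time_path l \<eta>) g2 x) \<le> sqrt (2 * l) * I" if "0 < \<eta>" "\<eta> < 1" for \<eta>
      using norm_heat_transform_le[OF Re_time_path_nonneg[OF l0] time_path_nonzero[OF l0] g2, of \<eta> x]
        norm_time_path_powr_le[OF l0, of \<eta>] that
      by (smt (verit, best) I_def integral_nonneg_AE AE_I2 abs_ge_zero mult_right_mono)
    then have "cmod (heat_transform (time_path l \<xi>) g x - heat_transform (time_path l 0) g x)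
        \<le> \<xi> * (sqrt 2 / l) * (sqrt (2 * l) * I) / (4 * pi)"
      using \<xi> by (intro norm_heat_transform_time_path_sub_le[OF l0 g]) (auto simp: g2_def)
    also have "\<dots> = \<xi> * (sqrt 2 / l * sqrt (2 * l) * I) / (4 * pi)"
      by simp
    also have "\<dots> \<le> 1 * (4 * I) / (4 * pi)"
      using \<xi> velocity l0 by (intro divide_right_mono mult_mono) (auto simp: I_def)
    finally have "cmod (heat_transform (time_path l \<xi>) g x - heat_transform (time_path l 0) g x) \<le> I / pi"
      by simp
    moreover have "cmod (heat_transform (time_path l 0) g x) \<le> M"
      unfolding time_path_0 using l0 M by (intro norm_heat_transform_real_le) auto
    ultimately show ?thesis
      using norm_triangle_ineq2[of "heat_transform (time_path l \<xi>) g x" "heat_transform (time_path l 0) g x"]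
      by linarith
  qed
  then show ?thesis by blast
qed

lemma norm_heat_transform_chirp_sub_le:
  assumes g: "schwartz g"
  shows "\<exists>C. \<forall>l x. l \<ge> 1/2 \<longrightarrow> cmod (heat_transform (\<i> / of_real l) g x - of_real (g x)) \<le> C / l"
proof -
  obtain B where B: "\<And>l \<xi> x. l \<ge> 1/2 \<Longrightarrow> 0 < \<xi> \<Longrightarrow> \<xi> < 1 \<Longrightarrow>
      cmod (heat_transform (time_path l \<xi>) (deriv (deriv g)) x) \<le> B"
    using norm_heat_transform_time_path_bounded[OF schwartz_deriv[OF schwartz_deriv[OF g]]] by blast
  obtain M where M: "\<And>y. \<bar>deriv (deriv g) y\<bar> \<le> M"
    using schwartz_bounded[OF g, of 0 2] by (auto simp: numeral_eq_Suc)
  have "cmod (heat_transform (\<i> / of_real l) g x - of_real (g x)) \<le> (sqrt 2 * B / (4 * pi) + M / (2 * pi)) / l"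
    if l: "l \<ge> 1/2" for l x
  proof -
    have l0: "l > 0" using l by simp
    have "cmod (heat_transform (time_path l 1) g x - heat_transform (time_path l 0) g x)
        \<le> 1 * (sqrt 2 / l) * B / (4 * pi)"
      using B[OF l] by (intro norm_heat_transform_time_path_sub_le[OF l0 g]) auto
    moreover have "cmod (heat_transform (time_path l 0) g x - of_real (g x)) \<le> M * (1 / l) / (2 * pi)"
      unfolding time_path_0 using l0 M by (intro norm_heat_transform_real_sub_le[OF _ g]) auto
    ultimately have "cmod (heat_transform (time_path l 1) g x - of_real (g x))
        \<le> 1 * (sqrt 2 / l) * B / (4 * pi) + M * (1 / l) / (2 * pi)"
      using norm_triangle_ineq[of "heat_transform (time_path l 1) g x - heat_transform (time_path l 0) g x"
          "heat_transform (time_path l 0) g x - of_real (g x)"]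
      by simp
    then show ?thesis
      unfolding time_path_1 using l0 by (simp add: field_simps)
  qed
  then show ?thesis by blast
qed

lemma norm_heat_transform_chirp_sub_times_le:
  assumes l: "l > 0" and g: "schwartz g"
  shows "\<bar>x\<bar> * cmod (heat_transform (\<i> / of_real l) g x - of_real (g x)) \<le>
         cmod (heat_transform (\<i> / of_real l) (\<lambda>w. w * g w) x - of_real (x * g x)) +
         1 / l / (2 * pi) * (cmod (heat_transform (\<i> / of_real l) (deriv g) x - of_real (deriv g x)) +
           \<bar>deriv g x\<bar>)"
proof -
  let ?s = "\<i> / of_real l"
  let ?D = "\<lambda>g x. heat_transform ?s g x - of_real (g x)"
  have s: "0 \<le> Re ?s" "?s \<noteq> 0" "cmod ?s = 1 / l"
    using l by (simp_all add: norm_divide)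
  have "of_real x * ?D g x = ?D (\<lambda>w. w * g w) x - ?s / (2 * of_real pi) * (?D (deriv g) x + of_real (deriv g x))"
    using heat_transform_times_id[OF s(1,2) g, of x] by (simp add: algebra_simps)
  then have "\<bar>x\<bar> * cmod (?D g x) \<le>
      cmod (?D (\<lambda>w. w * g w) x) + cmod (?s / (2 * of_real pi) * (?D (deriv g) x + of_real (deriv g x)))"
    by (metis norm_mult norm_of_real norm_triangle_ineq4 real_norm_def)
  also have "\<dots> \<le> cmod (?D (\<lambda>w. w * g w) x) + 1 / l / (2 * pi) * (cmod (?D (deriv g) x) + \<bar>deriv g x\<bar>)"
    using norm_triangle_ineq[of "?D (deriv g) x" "of_real (deriv g x)"] l
    by (simp add: norm_mult norm_divide s(3) divide_right_mono)
  finally show ?thesis .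
qed

lemma weighted_norm_heat_transform_chirp_sub_le:
  assumes "schwartz g"
  shows "\<exists>C. \<forall>l x. l \<ge> 1/2 \<longrightarrow>
           \<bar>x\<bar> ^ k * cmod (heat_transform (\<i> / of_real l) g x - of_real (g x)) \<le> C / l"
  using assms
proof (induction k arbitrary: g)
  case 0
  then show ?case using norm_heat_transform_chirp_sub_le by simp
next
  case (Suc k)
  let ?D = "\<lambda>l g x. cmod (heat_transform (\<i> / of_real l) g x - of_real (g x))"
  obtain C1 where C1: "\<And>l x. l \<ge> 1/2 \<Longrightarrow> \<bar>x\<bar> ^ k * ?D l (\<lambda>w. w * g w) x \<le> C1 / l"
    using Suc.IH[OF schwartz_times_id[OF Suc.prems]] by blast
  obtain C2 where C2: "\<And>l x. l \<ge> 1/2 \<Longrightarrow> \<bar>x\<bar> ^ k * ?D l (deriv g) x \<le> C2 / l"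
    using Suc.IH[OF schwartz_deriv[OF Suc.prems]] by blast
  obtain C3 where C3: "\<And>x. \<bar>x ^ k * (deriv ^^ 1) g x\<bar> \<le> C3"
    using schwartz_bounded[OF Suc.prems] by blast
  have "\<bar>x\<bar> ^ Suc k * ?D l g x \<le> (C1 + (2 * \<bar>C2\<bar> + C3) / (2 * pi)) / l"
    if l: "l \<ge> 1/2" for l x
  proof -
    have l0: "l > 0" using l by simp
    have "\<bar>x\<bar> ^ k * (\<bar>x\<bar> * ?D l g x) \<le> \<bar>x\<bar> ^ k *
        (?D l (\<lambda>w. w * g w) x + 1 / l / (2 * pi) * (?D l (deriv g) x + \<bar>deriv g x\<bar>))"
      using norm_heat_transform_chirp_sub_times_le[OF l0 Suc.prems, of x] by (intro mult_left_mono) auto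
    then have "\<bar>x\<bar> ^ Suc k * ?D l g x \<le> \<bar>x\<bar> ^ k * ?D l (\<lambda>w. w * g w) x +
        1 / l / (2 * pi) * (\<bar>x\<bar> ^ k * ?D l (deriv g) x + \<bar>x ^ k * (deriv ^^ 1) g x\<bar>)"
      by (simp add: algebra_simps abs_mult power_abs)
    also have "\<dots> \<le> C1 / l + 1 / l / (2 * pi) * (2 * \<bar>C2\<bar> + C3)"
    proof (intro add_mono mult_left_mono)
      have "\<bar>x\<bar> ^ k * ?D l (deriv g) x \<le> \<bar>C2\<bar> / l"
        using C2[OF l, of x] divide_right_mono[OF abs_ge_self[of C2], of l] l0 by linarith
      also have "\<dots> \<le> 2 * \<bar>C2\<bar>"
        using l mult_left_mono[of 1 "2 * l" "\<bar>C2\<bar>"] by (simp add: field_simps)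
      finally show "\<bar>x\<bar> ^ k * ?D l (deriv g) x \<le> 2 * \<bar>C2\<bar>" .
    qed (use C1[OF l] C3 l0 in auto)
    also have "\<dots> = (C1 + (2 * \<bar>C2\<bar> + C3) / (2 * pi)) / l"
      using l0 by (simp add: field_simps)
    finally show ?thesis .
  qed
  then show ?case by blast
qed

lemma powr_weighted_norm_heat_transform_chirp_sub_le:
  assumes "schwartz g" "\<sigma> > 0"
  shows "\<exists>C. \<forall>l x. l \<ge> 1/2 \<longrightarrow>
           (1 + \<bar>x\<bar> powr \<sigma>) * cmod (heat_transform (\<i> / of_real l) g x - of_real (g x)) \<le> C / l"
proof -
  let ?D = "\<lambda>l x. cmod (heat_transform (\<i> / of_real l) g x - of_real (g x))"
  obtain C0 where C0: "\<And>l x. l \<ge> 1/2 \<Longrightarrow> \<bar>x\<bar> ^ 0 * ?D l x \<le> C0 / l"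
    using weighted_norm_heat_transform_chirp_sub_le[OF assms(1)] by blast
  obtain Ck where Ck: "\<And>l x. l \<ge> 1/2 \<Longrightarrow> \<bar>x\<bar> ^ nat \<lceil>\<sigma>\<rceil> * ?D l x \<le> Ck / l"
    using weighted_norm_heat_transform_chirp_sub_le[OF assms(1)] by blast
  have "(1 + \<bar>x\<bar> powr \<sigma>) * ?D l x \<le> (2 * (C0 + Ck)) / l" if "l \<ge> 1/2" for l x
  proof -
    have "(1 + \<bar>x\<bar> powr \<sigma>) * ?D l x \<le> 2 * (1 + \<bar>x\<bar> ^ nat \<lceil>\<sigma>\<rceil>) * ?D l x"
      using one_plus_powr_le_power[OF assms(2)] by (intro mult_right_mono) auto
    also have "\<dots> = 2 * (\<bar>x\<bar> ^ 0 * ?D l x + \<bar>x\<bar> ^ nat \<lceil>\<sigma>\<rceil> * ?D l x)"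
      by (simp add: algebra_simps)
    also have "\<dots> \<le> 2 * (C0 / l + Ck / l)"
      using C0[OF that, of x] Ck[OF that, of x] by simp
    finally show ?thesis
      by (simp add: add_divide_distrib)
  qed
  then show ?thesis by blast
qed

section \<open>The fractional Fourier transform\<close>

lemma imaginary_powr_minus_half:
  assumes "l > 0"
  shows "(\<i> / of_real l) powr (-1/2) = of_real (sqrt l) * exp (- \<i> * of_real pi / 4)"
proof -
  have "\<i> / of_real l = \<i> * of_real (1 / l)"
    by simp
  also have "Ln \<dots> = of_real (ln (1 / l)) + \<i> * of_real pi / 2"
    using assms Ln_of_real[of "1 / l"] by (subst Ln_times_ii) auto
  finally have Ln: "Ln (\<i> / of_real l) = of_real (ln (1 / l)) + \<i> * of_real pi / 2" .
  have "(\<i> / of_real l) powr (-1/2) = exp (-1/2 * Ln (\<i> / of_real l))"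
    using assms by (simp add: powr_def)
  also have "\<dots> = exp (of_real (ln l / 2)) * exp (- \<i> * of_real pi / 4)"
    unfolding Ln exp_add[symmetric] using assms by (intro arg_cong[where f = exp]) (simp add: ln_div field_simps)
  also have "exp (of_real (ln l / 2)) = (of_real (sqrt l) :: complex)"
    using assms by (simp add: powr_half_sqrt[symmetric] powr_def flip: exp_of_real)
  finally show ?thesis .
qed

lemma heat_kernel_imaginary:
  assumes "l > 0"
  shows "heat_kernel (\<i> / of_real l) x w =
         of_real (sqrt l) * exp (- \<i> * of_real pi / 4) * exp (\<i> * of_real (pi * l * (w - x)\<^sup>2))"
proof -
  have "- of_real pi * (of_real (w - x))\<^sup>2 / (\<i> / of_real l) = \<i> * of_real (pi * l * (w - x)\<^sup>2)"
    using assms by (simp add: field_simps)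
  then show ?thesis
    unfolding heat_kernel_def imaginary_powr_minus_half[OF assms] by (simp add: ac_simps)
qed

lemma chirp_phase_eq:
  assumes "sin p \<noteq> 0" "cos p \<noteq> 0"
  shows "2 * pi * (((1/2) * (t\<^sup>2 + w\<^sup>2) * cos p - t * w) / sin p) =
         pi * cot p * (w - t / cos p)\<^sup>2 - pi * t\<^sup>2 * tan p"
proof -
  have "pi * cot p * (w - t / cos p)\<^sup>2 - pi * t\<^sup>2 * tan p
      = pi * (cos p * (w * cos p - t)\<^sup>2 - t\<^sup>2 * (sin p)\<^sup>2 * cos p) / (sin p * (cos p)\<^sup>2)"
    using assms by (simp add: tan_def cot_def field_simps power2_eq_square)
  also have "\<dots> = pi * (cos p * (w * cos p - t)\<^sup>2 - t\<^sup>2 * (1 - (cos p)\<^sup>2) * cos p) / (sin p * (cos p)\<^sup>2)"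
    by (simp only: sin_squared_eq)
  also have "\<dots> = 2 * pi * (((1/2) * (t\<^sup>2 + w\<^sup>2) * cos p - t * w) / sin p)"
    using assms by (simp add: field_simps power2_eq_square)
  finally show ?thesis ..
qed

lemma not_multiple_of_pi:
  assumes "0 < p" "p < pi"
  shows "\<not> (\<exists>k::int. p = pi * of_int k)"
proof
  assume "\<exists>k::int. p = pi * of_int k"
  then obtain k :: int where k: "p = pi * of_int k" by blast
  with assms have "0 < k" "k < 1"
    by (auto simp: zero_less_mult_iff mult_less_cancel_left2)
  then show False by simp
qed

definition frft_prefactor :: "real \<Rightarrow> real \<Rightarrow> complex" where
  "frft_prefactor p t = of_real (cos p powr (-1/2)) * exp (- \<i> * of_real (pi * t\<^sup>2 * tan p))"

lemma frft_eq_heat_transform: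
  assumes p: "0 < p" "p < pi / 2"
  shows "frft f p t = frft_prefactor p t * heat_transform (\<i> / of_real (cot p)) f (t / cos p)"
proof -
  have sc: "0 < sin p" "0 < cos p"
    using p by (auto intro: sin_gt_zero cos_gt_zero)
  define l where "l = cot p"
  have l: "0 < l" unfolding l_def cot_def using sc by simp
  define E where "E = exp (- \<i> * of_real (pi * t\<^sup>2 * tan p))"
  have not_mult: "\<not> (\<exists>k::int. p = 2 * pi * of_int k)" "\<not> (\<exists>k::int. p = pi * of_int k)"
    using not_multiple_of_pi[of p] p by (auto, metis mult.assoc of_int_mult of_int_numeral)
  have "\<lfloor>p / pi\<rfloor> = 0"
    using p by (intro floor_unique) (auto simp: field_simps)
  then have sigma: "sigma_phase p = 1"
    unfolding sigma_phase_def by simp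
  have phase: "e2pi (((1/2) * (t\<^sup>2 + w\<^sup>2) * cos p - t * w) / sin p) = E * exp (\<i> * of_real (pi * l * (w - t / cos p)\<^sup>2))"
    for w
  proof -
    have "e2pi (((1/2) * (t\<^sup>2 + w\<^sup>2) * cos p - t * w) / sin p) =
          exp (\<i> * of_real (pi * l * (w - t / cos p)\<^sup>2 - pi * t\<^sup>2 * tan p))"
      unfolding e2pi_def l_def chirp_phase_eq[OF sc[THEN less_imp_neq, symmetric], symmetric]
      by (simp add: algebra_simps)
    then show ?thesis
      unfolding E_def by (simp add: right_diff_distrib exp_diff exp_minus field_simps)
  qed
  define J where "J = (LINT w|lborel. exp (\<i> * of_real (pi * l * (w - t / cos p)\<^sup>2)) * of_real (f w))"
  have "frft f p t = exp (- \<i> * of_real pi / 4) * of_real (sin p powr (-1/2)) * (E * J)"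
    unfolding frft_def J_def using not_mult sigma sc phase
    by (simp add: e2pi_def mult.assoc field_simps)
  moreover have "heat_transform (\<i> / of_real l) f (t / cos p) =
      of_real (sqrt l) * exp (- \<i> * of_real pi / 4) * J"
    unfolding heat_transform_def heat_kernel_imaginary[OF l] J_def by (simp add: mult.assoc)
  moreover have "sin p powr (-1/2) = cos p powr (-1/2) * sqrt l"
    using sc by (simp add: l_def cot_def powr_minus_divide powr_half_sqrt real_sqrt_divide)
  ultimately show ?thesis
    unfolding frft_prefactor_def l_def[symmetric] E_def[symmetric] by (simp add: ac_simps)
qed

lemma sigma_phase_uminus:
  assumes "\<not> (\<exists>k::int. p = pi * of_int k)"
  shows "sigma_phase (- p) = - sigma_phase p"
proof -
  have "p / pi \<notin> \<int>"
    using assms by (auto elim!: Ints_cases simp: field_simps)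
  then have "of_int \<lfloor>p / pi\<rfloor> < p / pi"
    by (metis Ints_of_int of_int_floor_le order.not_eq_order_implies_strict)
  then have "\<lfloor>- p / pi\<rfloor> = - \<lfloor>p / pi\<rfloor> - 1"
    using real_of_int_floor_add_one_gt[of "p / pi"] by (intro floor_unique) linarith+
  then show ?thesis
    unfolding sigma_phase_def by simp
qed

lemma frft_uminus: "frft f (- p) t = cnj (frft f p t)"
proof -
  have mult_neg: "(\<exists>k::int. - p = c * of_int k) \<longleftrightarrow> (\<exists>k::int. p = c * of_int k)" for c
    by (metis minus_minus mult_minus_right of_int_minus)
  consider (even) "\<exists>k::int. p = 2 * pi * of_int k"
    | (odd) "\<not> (\<exists>k::int. p = 2 * pi * of_int k)" "\<exists>k::int. p = pi * of_int k"
    | (generic) "\<not> (\<exists>k::int. p = pi * of_int k)"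
    by (metis mult.assoc of_int_mult of_int_numeral)
  then show ?thesis
  proof cases
    case generic
    then have "\<not> (\<exists>k::int. p = 2 * pi * of_int k)"
      by (metis mult.assoc mult.commute of_int_mult of_int_numeral)
    define P where "P w = ((1/2) * (t\<^sup>2 + w\<^sup>2) * cos p - t * w) / sin p" for w
    have e2pi_uminus: "e2pi (- x) = cnj (e2pi x)" for x
      by (simp add: e2pi_def exp_cnj)
    have "e2pi (((1/2) * (t\<^sup>2 + w\<^sup>2) * cos (- p) - t * w) / sin (- p)) * of_real (f w)
        = cnj (e2pi (P w) * of_real (f w))" for w
      unfolding P_def by (simp flip: e2pi_uminus)
    then have "frft f (- p) t = e2pi (- sigma_phase (- p) / 8) * of_real (\<bar>sin (- p)\<bar> powr (-1/2)) *
        (LINT w|lborel. cnj (e2pi (P w) * of_real (f w)))"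
      unfolding frft_def mult_neg using generic \<open>\<not> (\<exists>k::int. p = 2 * pi * of_int k)\<close>
      by (simp only: if_False)
    also have "\<dots> = e2pi (- sigma_phase (- p) / 8) * of_real (\<bar>sin (- p)\<bar> powr (-1/2)) *
        cnj (LINT w|lborel. e2pi (P w) * of_real (f w))"
      by (subst Bochner_Integration.integral_cnj) (rule refl)
    also have "\<dots> = cnj (frft f p t)"
      unfolding frft_def P_def sigma_phase_uminus[OF generic]
      using generic \<open>\<not> (\<exists>k::int. p = 2 * pi * of_int k)\<close>
      by (simp add: e2pi_uminus)
    finally show ?thesis .
  qed (simp_all add: frft_def mult_neg)
qed

lemma norm_frft_uminus_sub: "cmod (frft f (- p) t - of_real (f t)) = cmod (frft f p t - of_real (f t))"
proof -
  have "frft f (- p) t - of_real (f t) = cnj (frft f p t - of_real (f t))"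
    by (simp add: frft_uminus)
  then show ?thesis
    by (simp only: complex_mod_cnj)
qed

lemma frft_0: "frft f 0 t = of_real (f t)"
  by (auto simp: frft_def intro: exI[of _ 0])

lemma abs_le_abs_divide_cos: "0 \<le> p \<Longrightarrow> p \<le> 1 \<Longrightarrow> \<bar>t\<bar> \<le> \<bar>t / cos (p::real)\<bar>"
  using cos_ge_half[of p] cos_le_one[of p] by (simp add: abs_divide le_divide_eq mult_left_le)

lemma norm_frft_prefactor_le:
  assumes "0 \<le> p" "p \<le> 1"
  shows "cmod (frft_prefactor p t) \<le> 2"
proof -
  have "cmod (frft_prefactor p t) = cos p powr (-1/2)"
    by (simp add: frft_prefactor_def norm_mult norm_exp_eq_Re)
  also have "\<dots> \<le> 1 / cos p"
    using cos_powr_minus_half_bounds[OF assms] by simp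
  also have "\<dots> \<le> 2"
    using cos_ge_half[OF assms] by (simp add: field_simps)
  finally show ?thesis .
qed

lemma norm_frft_prefactor_sub_one_le:
  assumes p: "0 < p" "p < 1"
  shows "cmod (frft_prefactor p t - 1) \<le> 2 * pi * p * (1 + t\<^sup>2)"
proof -
  define a where "a = cos p powr (-1/2)"
  define E where "E = exp (- \<i> * of_real (pi * t\<^sup>2 * tan p))"
  have a: "1 \<le> a" "a - 1 \<le> 2 * p"
  proof -
    show "1 \<le> a"
      unfolding a_def using cos_powr_minus_half_bounds[of p] p by simp
    have "a \<le> 1 + (1 - cos p) * (1 / cos p)"
      unfolding a_def using cos_powr_minus_half_bounds[of p] cos_ge_half[of p] p by (simp add: field_simps)
    also have "\<dots> \<le> 1 + p * 2"
      using cos_ge_half[of p] one_sub_cos_le[of p] p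
      by (intro add_left_mono mult_mono) (auto simp: field_simps)
    finally show "a - 1 \<le> 2 * p" by simp
  qed
  have "cmod (of_real a * E - 1) \<le> cmod (of_real (a - 1) * E) + cmod (E - 1)"
    using norm_triangle_ineq[of "of_real (a - 1) * E" "E - 1"] by (simp add: algebra_simps)
  also have "cmod (of_real (a - 1) * E) = a - 1"
    using a by (simp only: norm_mult norm_of_real) (simp add: E_def norm_exp_eq_Re)
  also have "cmod (E - 1) \<le> pi * t\<^sup>2 * tan p"
    using norm_exp_ii_sub_one_le[of "- (pi * t\<^sup>2 * tan p)"] tan_gt_zero[of p] p pi_gt3
    by (simp add: E_def abs_mult)
  also have "\<dots> \<le> pi * t\<^sup>2 * (2 * p)"
    using tan_le_two_mult[of p] p by (intro mult_left_mono) auto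
  also have "a - 1 \<le> 2 * pi * p"
  proof -
    have "2 * p * 1 \<le> 2 * p * pi"
      using p pi_gt3 by (intro mult_left_mono) auto
    then show ?thesis using a(2) by (simp add: ac_simps)
  qed
  finally have "cmod (of_real a * E - 1) \<le> 2 * pi * p + pi * t\<^sup>2 * (2 * p)"
    by simp
  also have "\<dots> = 2 * pi * p * (1 + t\<^sup>2)"
    by (simp add: algebra_simps)
  finally show ?thesis
    unfolding frft_prefactor_def a_def E_def .
qed

lemma weighted_heat_transform_chirp_term_le:
  assumes f: "schwartz f" and \<sigma>: "\<sigma> > 0"
  shows "\<exists>C. \<forall>p t. 0 < p \<longrightarrow> p < 1 \<longrightarrow>
           cmod (heat_transform (\<i> / of_real (cot p)) f (t / cos p) - of_real (f (t / cos p))) *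
           (1 + \<bar>t\<bar> powr \<sigma>) \<le> C * p"
proof -
  obtain C where C: "\<And>l x. l \<ge> 1/2 \<Longrightarrow>
      (1 + \<bar>x\<bar> powr \<sigma>) * cmod (heat_transform (\<i> / of_real l) f x - of_real (f x)) \<le> C / l"
    using powr_weighted_norm_heat_transform_chirp_sub_le[OF f \<sigma>] by blast
  have "0 \<le> C"
    using order_trans[OF _ C[of 1 0]] by simp
  have "cmod (heat_transform (\<i> / of_real (cot p)) f (t / cos p) - of_real (f (t / cos p))) *
      (1 + \<bar>t\<bar> powr \<sigma>) \<le> 2 * C * p" if p: "0 < p" "p < 1" for p t
  proof -
    let ?D = "cmod (heat_transform (\<i> / of_real (cot p)) f (t / cos p) - of_real (f (t / cos p)))"
    have "1 + \<bar>t\<bar> powr \<sigma> \<le> 1 + \<bar>t / cos p\<bar> powr \<sigma>"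
      using abs_le_abs_divide_cos[of p t] p \<sigma> by (intro add_left_mono powr_mono2) auto
    then have "?D * (1 + \<bar>t\<bar> powr \<sigma>) \<le> (1 + \<bar>t / cos p\<bar> powr \<sigma>) * ?D"
      using mult_right_mono norm_ge_zero by (metis mult.commute)
    also have "\<dots> \<le> C / cot p"
      using C[OF cot_ge_half[of p], of "t / cos p"] p by simp
    also have "\<dots> = C * tan p"
      by (simp add: cot_def tan_def)
    also have "\<dots> \<le> C * (2 * p)"
      using \<open>0 \<le> C\<close> tan_le_two_mult[of p] p by (intro mult_left_mono) auto
    finally show ?thesis by simp
  qed
  then show ?thesis by blast
qed

lemma weighted_frft_prefactor_term_le:
  assumes f: "schwartz f" and \<sigma>: "\<sigma> > 0"
  shows "\<exists>C. \<forall>p t. 0 < p \<longrightarrow> p < 1 \<longrightarrow>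
           cmod (frft_prefactor p t - 1) * \<bar>f (t / cos p)\<bar> * (1 + \<bar>t\<bar> powr \<sigma>) \<le> C * p"
proof -
  obtain Q0 Q2 where Q0: "\<And>y. \<bar>y\<bar> ^ 0 * (1 + \<bar>y\<bar> powr \<sigma>) * \<bar>(deriv ^^ 0) f y\<bar> \<le> Q0"
    and Q2: "\<And>y. \<bar>y\<bar> ^ 2 * (1 + \<bar>y\<bar> powr \<sigma>) * \<bar>(deriv ^^ 0) f y\<bar> \<le> Q2"
    using schwartz_powr_weighted_bounded[OF f \<sigma>] by metis
  have "cmod (frft_prefactor p t - 1) * \<bar>f (t / cos p)\<bar> * (1 + \<bar>t\<bar> powr \<sigma>) \<le> 2 * pi * (Q0 + Q2) * p"
    if p: "0 < p" "p < 1" for p t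
  proof -
    define x where "x = t / cos p"
    have "\<bar>t\<bar> \<le> \<bar>x\<bar>"
      using abs_le_abs_divide_cos[of p t] p by (simp add: x_def)
    then have "(1 + t\<^sup>2) * (\<bar>f x\<bar> * (1 + \<bar>t\<bar> powr \<sigma>)) \<le> (1 + x\<^sup>2) * (\<bar>f x\<bar> * (1 + \<bar>x\<bar> powr \<sigma>))"
      using \<sigma> by (intro mult_mono mult_left_mono add_left_mono powr_mono2)
         (auto simp: abs_le_square_iff add_nonneg_nonneg)
    also have "\<dots> \<le> Q0 + Q2"
      using Q0[of x] Q2[of x] by (simp add: algebra_simps power2_abs)
    finally have weight: "(1 + t\<^sup>2) * (\<bar>f x\<bar> * (1 + \<bar>t\<bar> powr \<sigma>)) \<le> Q0 + Q2" .
    have "cmod (frft_prefactor p t - 1) * \<bar>f x\<bar> * (1 + \<bar>t\<bar> powr \<sigma>)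
        = cmod (frft_prefactor p t - 1) * (\<bar>f x\<bar> * (1 + \<bar>t\<bar> powr \<sigma>))"
      by (simp only: mult.assoc)
    also have "\<dots> \<le> 2 * pi * p * (1 + t\<^sup>2) * (\<bar>f x\<bar> * (1 + \<bar>t\<bar> powr \<sigma>))"
      using norm_frft_prefactor_sub_one_le[OF p, of t] by (rule mult_right_mono) simp
    also have "\<dots> = 2 * pi * p * ((1 + t\<^sup>2) * (\<bar>f x\<bar> * (1 + \<bar>t\<bar> powr \<sigma>)))"
      by (simp only: mult.assoc)
    also have "\<dots> \<le> 2 * pi * p * (Q0 + Q2)"
      using weight p by (intro mult_left_mono) auto
    finally show ?thesis
      by (simp add: x_def ac_simps)
  qed
  then show ?thesis by blast
qed

lemma frft_sub_weighted_le:
  assumes f: "schwartz f" and \<sigma>: "\<sigma> > 0"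
  shows "\<exists>C. \<forall>p t. 0 < p \<longrightarrow> p < 1 \<longrightarrow>
           cmod (frft f p t - of_real (f t)) * (1 + \<bar>t\<bar> powr \<sigma>) \<le> C * p"
proof -
  obtain C1 where C1: "\<And>p t. 0 < p \<Longrightarrow> p < 1 \<Longrightarrow>
      cmod (heat_transform (\<i> / of_real (cot p)) f (t / cos p) - of_real (f (t / cos p))) *
      (1 + \<bar>t\<bar> powr \<sigma>) \<le> C1 * p"
    using weighted_heat_transform_chirp_term_le[OF f \<sigma>] by blast
  obtain C2 where C2: "\<And>p t. 0 < p \<Longrightarrow> p < 1 \<Longrightarrow>
      cmod (frft_prefactor p t - 1) * \<bar>f (t / cos p)\<bar> * (1 + \<bar>t\<bar> powr \<sigma>) \<le> C2 * p"
    using weighted_frft_prefactor_term_le[OF f \<sigma>] by blast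
  obtain C3 where C3: "\<And>c t. 1/2 \<le> c \<Longrightarrow> c \<le> 1 \<Longrightarrow>
      \<bar>f (t / c) - f t\<bar> * (1 + \<bar>t\<bar> powr \<sigma>) \<le> C3 * (1 - c)"
    using schwartz_dilation_sub_le[OF f \<sigma>] by blast
  have "cmod (frft f p t - of_real (f t)) * (1 + \<bar>t\<bar> powr \<sigma>) \<le> (2 * C1 + C2 + C3) * p"
    if p: "0 < p" "p < 1" for p t
  proof -
    let ?A = "frft_prefactor p t" and ?x = "t / cos p" and ?W = "1 + \<bar>t\<bar> powr \<sigma>"
    let ?H = "heat_transform (\<i> / of_real (cot p)) f ?x"
    have "frft f p t - of_real (f t) = ?A * (?H - of_real (f ?x)) + (?A - 1) * of_real (f ?x) + of_real (f ?x - f t)"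
      using frft_eq_heat_transform[of p f t] p pi_gt3 by (simp add: algebra_simps)
    then have "cmod (frft f p t - of_real (f t)) \<le>
        cmod (?A * (?H - of_real (f ?x))) + cmod ((?A - 1) * of_real (f ?x)) + cmod (of_real (f ?x - f t))"
      by (metis norm_triangle_ineq add_right_mono order_trans)
    then have "cmod (frft f p t - of_real (f t)) * ?W \<le>
        (cmod ?A * cmod (?H - of_real (f ?x)) + cmod (?A - 1) * \<bar>f ?x\<bar> + \<bar>f ?x - f t\<bar>) * ?W"
      by (intro mult_right_mono) (simp_all add: norm_mult flip: of_real_diff)
    also have "\<dots> = cmod ?A * (cmod (?H - of_real (f ?x)) * ?W) + cmod (?A - 1) * \<bar>f ?x\<bar> * ?W +
        \<bar>f ?x - f t\<bar> * ?W"
      by (simp add: algebra_simps)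
    also have "\<dots> \<le> 2 * (C1 * p) + C2 * p + C3 * p"
    proof (intro add_mono)
      show "cmod ?A * (cmod (?H - of_real (f ?x)) * ?W) \<le> 2 * (C1 * p)"
        by (rule mult_mono[OF norm_frft_prefactor_le C1[OF p]]) (use p in auto)
      show "cmod (?A - 1) * \<bar>f ?x\<bar> * ?W \<le> C2 * p"
        using C2[OF p] .
      have "0 \<le> C3"
        using C3[of "1/2" 0] by simp
      then have "C3 * (1 - cos p) \<le> C3 * p"
        using one_sub_cos_le[of p] p by (intro mult_left_mono) auto
      then show "\<bar>f ?x - f t\<bar> * ?W \<le> C3 * p"
        using C3[OF cos_ge_half[of p] cos_le_one, of t] p by linarith
    qed
    finally show ?thesis
      by (simp add: algebra_simps)
  qed
  then show ?thesis by blast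
qed

theorem lemma2p6:
  fixes f :: "real \<Rightarrow> real" and \<sigma> :: real
  assumes "schwartz f" and "\<sigma> > 0"
  shows "\<exists>C. \<forall>\<phi> t. \<bar>\<phi>\<bar> < 1 \<longrightarrow>
           cmod (frft f \<phi> t - complex_of_real (f t)) \<le> C * \<bar>\<phi>\<bar> / (1 + \<bar>t\<bar> powr \<sigma>)"
proof -
  obtain K where K: "\<And>p t. 0 < p \<Longrightarrow> p < 1 \<Longrightarrow>
      cmod (frft f p t - of_real (f t)) * (1 + \<bar>t\<bar> powr \<sigma>) \<le> K * p"
    using frft_sub_weighted_le[OF assms] by blast
  have "cmod (frft f \<phi> t - of_real (f t)) * (1 + \<bar>t\<bar> powr \<sigma>) \<le> K * \<bar>\<phi>\<bar>" if "\<bar>\<phi>\<bar> < 1" for \<phi> t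
  proof (cases \<phi> "0::real" rule: linorder_cases)
    case less
    then show ?thesis
      using K[of "- \<phi>" t] norm_frft_uminus_sub[of f "- \<phi>" t] that by simp
  next
    case equal
    then show ?thesis by (simp add: frft_0)
  next
    case greater
    then show ?thesis using K[of \<phi> t] that by simp
  qed
  moreover have "0 < 1 + \<bar>t\<bar> powr \<sigma>" for t :: real
    by (simp add: add_pos_nonneg)
  ultimately show ?thesis
    by (intro exI[of _ K] allI impI) (simp add: pos_le_divide_eq)
qed

end
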